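(* Let $n\ge2$, $t>0$, $1\le p<\infty$ and $w\in A_{p,loc}^{n/2-1}(\mathbb{R}^+)$. Then there is $C$ (depending on $n,t,p,w$) such that $$\|e^{-tH}f\|_{L^{p,2}(w)}\le C\|f\|_{L^{p,2}(w)}$$ for all $f\in L^{p,2}(w)$.
   Context: $H=-\Delta+|x|^2$ on $\mathbb{R}^n$ and $e^{-tH}$ is the Hermite semigroup, the integral operator with kernel $K_t(x,y)=\pi^{-n/2}(\sinh2t)^{-n/2}\exp(-\frac12\coth(2t)(|x|^2+|y|^2)+\operatorname{csch}(2t)x\cdot y)$. On $\mathbb{R}^+$ let $d\mu_{n/2-1}=r^{n-1}dr$. For $1<p<\infty$, $A_{p,loc}^{n/2-1}(\mathbb{R}^+)$ is the set of positive weights $w$ with $\big(\frac1{\mu(Q)}\int_Qw\,d\mu\big)\big(\frac1{\mu(Q)}\int_Qw^{-1/(p-1)}d\mu\big)^{p-1}\le C$ for all intervals $Q\subset\mathbb{R}^+$ of length at most $1$ ($\mu=\mu_{n/2-1}$); for $p=1$ it is the set of positive weights with $\frac1{\mu(Q)}\int_Qw\,d\mu\le C\operatorname{ess\,inf}_Qw$ for all such $Q$. $L^{p,2}(w)$ is the space of $f(r\omega)$ with $\|f\|_{L^{p,2}(w)}=\big(\int_0^\infty(\int_{S^{n-1}}|f(r\omega)|^2d\omega)^{p/2}w(r)r^{n-1}dr\big)^{1/p}<\infty$. *)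

theory Defs
  imports "HOL-Analysis.Analysis"
begin

(* Surface measure on the unit sphere S^{n-1} of R^n (n = CARD('n)),
   defined as the cone measure: sigma(A) = n * Lebesgue({t w : 0 < t <= 1, w in A}). *)
definition sphere_measure :: "(real ^ 'n) measure" where
  "sphere_measure =
     density (distr (restrict_space lborel (cball 0 1 - {0}))
                    (restrict_space borel (sphere 0 1))
                    (\<lambda>x. x /\<^sub>R norm x))
             (\<lambda>_. ennreal (real CARD('n)))"

(* real power on [0,\<infinity>] with \<infinity>^a = \<infinity> (a > 0 in all uses) *)
definition ennpow :: "ennreal \<Rightarrow> real \<Rightarrow> ennreal" where
  "ennpow x a = (if x = \<infinity> then \<infinity> else ennreal (enn2real x powr a))"

definition hermite_kernel :: "real \<Rightarrow> real ^ 'n \<Rightarrow> real ^ 'n \<Rightarrow> real" where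
  "hermite_kernel t x y =
     pi powr (- real CARD('n) / 2) * sinh (2 * t) powr (- real CARD('n) / 2) *
     exp (- (1/2) * (cosh (2 * t) / sinh (2 * t)) * ((norm x)\<^sup>2 + (norm y)\<^sup>2)
          + (1 / sinh (2 * t)) * (x \<bullet> y))"

definition hermite_semigroup :: "real \<Rightarrow> (real ^ 'n \<Rightarrow> complex) \<Rightarrow> real ^ 'n \<Rightarrow> complex" where
  "hermite_semigroup t f x = (\<integral>y. complex_of_real (hermite_kernel t x y) * f y \<partial>lborel)"

definition Lp2_norm :: "real \<Rightarrow> (real \<Rightarrow> real) \<Rightarrow> (real ^ 'n \<Rightarrow> complex) \<Rightarrow> ennreal" where
  "Lp2_norm p w f =
     ennpow (\<integral>\<^sup>+ r \<in> {0<..}.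
               ennpow (\<integral>\<^sup>+ \<omega>. ennreal ((cmod (f (r *\<^sub>R \<omega>)))\<^sup>2) \<partial>(sphere_measure :: (real ^ 'n) measure)) (p / 2)
               * ennreal (w r * r ^ (CARD('n) - 1)) \<partial>lborel)
            (1 / p)"

definition Lp2_space :: "real \<Rightarrow> (real \<Rightarrow> real) \<Rightarrow> (real ^ 'n \<Rightarrow> complex) set" where
  "Lp2_space p w = {f. f \<in> borel_measurable lborel \<and> Lp2_norm p w f < \<infinity>}"

(* local Muckenhoupt class A_{p,loc}^{n/2-1}(R^+), with d\<mu> = r^{n-1} dr;
   intervals Q = (a,b) \<subseteq> R^+ with 0 < b - a \<le> 1 *)
definition mu_meas :: "nat \<Rightarrow> real set \<Rightarrow> real" where
  "mu_meas n Q = (\<integral>r\<in>Q. r ^ (n - 1) \<partial>lborel)"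

definition Ap_loc :: "nat \<Rightarrow> real \<Rightarrow> (real \<Rightarrow> real) set" where
  "Ap_loc n p = {w. (\<lambda>r. indicator {0<..} r * w r) \<in> borel_measurable lborel \<and> (\<forall>r>0. w r > 0) \<and>
     (\<exists>C. \<forall>a b. 0 \<le> a \<longrightarrow> a < b \<longrightarrow> b - a \<le> 1 \<longrightarrow>
        (if p = 1 then
           set_integrable lborel {a<..<b} (\<lambda>r. w r * r ^ (n - 1)) \<and>
           (AE r in lborel. r \<in> {a<..<b} \<longrightarrow>
              (1 / mu_meas n {a<..<b}) * (\<integral>r\<in>{a<..<b}. w r * r ^ (n - 1) \<partial>lborel) \<le> C * w r)
         else
           set_integrable lborel {a<..<b} (\<lambda>r. w r * r ^ (n - 1)) \<and>
           set_integrable lborel {a<..<b} (\<lambda>r. w r powr (- 1 / (p - 1)) * r ^ (n - 1)) \<and>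
           ((1 / mu_meas n {a<..<b}) * (\<integral>r\<in>{a<..<b}. w r * r ^ (n - 1) \<partial>lborel)) *
           ((1 / mu_meas n {a<..<b}) * (\<integral>r\<in>{a<..<b}. w r powr (- 1 / (p - 1)) * r ^ (n - 1) \<partial>lborel))
              powr (p - 1) \<le> C))}"

end

theory Submission
  imports Defs
begin

text \<open>Since coth(2t) > csch(2t), the kernel is dominated by a product of Gaussians,
  K_t(x,y) \<le> c exp(-\<gamma>|x|^2) exp(-\<gamma>|y|^2), so e^{-tH} is dominated by a rank-one operator:
  |e^{-tH} f(x)| \<le> c exp(-\<gamma>|x|^2) \<Phi>(f) with \<Phi>(f) = \<integral> exp(-\<gamma>|y|^2) |f(y)| dy.
  It therefore suffices that the Gaussian has finite L^{p,2}(w) norm and that \<Phi> is bounded on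
  L^{p,2}(w). In polar coordinates, by Cauchy-Schwarz on the sphere and Hoelder's inequality in the
  radius, both reduce to \<integral>_0^\<infinity> exp(-c r^2) v(r) r^(n-1) dr < \<infinity> for v = w and v = w^(-1/(p-1))
  (for p = 1: to exp(-c r^2) \<le> K w(r) almost everywhere). The local A_p condition compares the
  mass of v on an interval of length at most 1 with its mass on a subinterval of comparable
  \<mu>-measure, so the mass of v on (k/4, k/4 + 1/2) grows at most geometrically in k, which the
  Gaussian factor beats.\<close>

section \<open>Polar coordinates\<close>

(* The value at the origin is an arbitrary point of the sphere, so that radial_proj maps into it. *)
definition radial_proj :: "real^'n \<Rightarrow> real^'n" where
  "radial_proj x = (if x = 0 then axis undefined 1 else x /\<^sub>R norm x)"

lemma radial_proj_in_sphere: "radial_proj x \<in> sphere 0 1"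
proof (cases "x = 0")
  case True then show ?thesis by (simp add: radial_proj_def norm_axis_1)
next
  case False then show ?thesis by (simp add: radial_proj_def)
qed

lemma borel_measurable_radial_proj[measurable]: "radial_proj \<in> borel_measurable borel"
  unfolding radial_proj_def by measurable

lemma measurable_radial_proj_sphere: "radial_proj \<in> borel \<rightarrow>\<^sub>M restrict_space borel (sphere (0::real^'n) 1)"
  by (rule measurable_restrict_space2) (insert radial_proj_in_sphere, auto)

lemma sets_sphere_measure: "sets (sphere_measure :: (real^'n) measure) = sets (restrict_space borel (sphere 0 1))"
  unfolding sphere_measure_def by simp

lemma space_sphere_measure: "space (sphere_measure :: (real^'n) measure) = sphere 0 1"
  unfolding sphere_measure_def by (simp add: space_restrict_space)

lemma emeasure_sphere_measure:
  assumes B: "B \<in> sets (sphere_measure :: (real^'n) measure)"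
  shows "emeasure (sphere_measure :: (real^'n) measure) B =
     ennreal (real CARD('n)) * emeasure lborel {x::real^'n. x \<noteq> 0 \<and> norm x \<le> 1 \<and> x /\<^sub>R norm x \<in> B}"
proof -
  have m: "(\<lambda>x::real^'n. x /\<^sub>R norm x) \<in> restrict_space lborel (cball 0 1 - {0}) \<rightarrow>\<^sub>M restrict_space borel (sphere 0 1)"
    by (rule measurable_restrict_space2) (auto intro!: measurable_restrict_space1 simp: norm_sgn[unfolded sgn_div_norm])
  have B': "B \<in> sets (restrict_space borel (sphere (0::real^'n) 1))" using B sets_sphere_measure by auto
  have "emeasure (sphere_measure :: (real^'n) measure) B = ennreal (real CARD('n)) *
      emeasure (restrict_space lborel (cball 0 1 - {0})) ((\<lambda>x::real^'n. x /\<^sub>R norm x) -` B \<inter> (cball 0 1 - {0}))"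
    unfolding sphere_measure_def
    using B' m by (simp add: emeasure_density nn_integral_cmult emeasure_distr space_restrict_space)
  also have "\<dots> = ennreal (real CARD('n)) * emeasure lborel {x::real^'n. x \<noteq> 0 \<and> norm x \<le> 1 \<and> x /\<^sub>R norm x \<in> B}"
  proof -
    have "(\<lambda>x::real^'n. x /\<^sub>R norm x) -` B \<inter> (cball 0 1 - {0}) \<in> sets (restrict_space lborel (cball 0 1 - {0}))"
      using measurable_sets[OF m B'] by (simp add: space_restrict_space)
    moreover have "(\<lambda>x::real^'n. x /\<^sub>R norm x) -` B \<inter> (cball 0 1 - {0}) = {x::real^'n. x \<noteq> 0 \<and> norm x \<le> 1 \<and> x /\<^sub>R norm x \<in> B}"
      by auto
    ultimately show ?thesis
      by (subst emeasure_restrict_space) (auto simp: sets_restrict_space_iff)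
  qed
  finally show ?thesis .
qed

definition cone :: "(real^'n) set \<Rightarrow> real \<Rightarrow> (real^'n) set" where
  "cone B b = {x. x \<noteq> 0 \<and> norm x \<le> b \<and> radial_proj x \<in> B}"

lemma sets_cone:
  assumes "B \<in> sets (restrict_space borel (sphere (0::real^'n) 1))"
  shows "cone B b \<in> sets borel"
proof -
  have "radial_proj -` B \<inter> space borel \<in> sets borel"
    using measurable_sets[OF measurable_radial_proj_sphere assms] .
  then have "radial_proj -` B \<in> sets (borel :: (real^'n) measure)" by simp
  moreover have "cone B b = radial_proj -` B \<inter> {x. x \<noteq> 0} \<inter> {x. norm x \<le> b}"
    by (auto simp: cone_def)
  moreover have "{x::real^'n. x \<noteq> 0} \<in> sets borel" "{x::real^'n. norm x \<le> b} \<in> sets borel"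
    by measurable
  ultimately show ?thesis by simp
qed

lemma radial_proj_scaleR: "c > 0 \<Longrightarrow> radial_proj (c *\<^sub>R x) = radial_proj x"
  by (auto simp: radial_proj_def)

lemma cone_eq_scaleR_image:
  assumes "b > 0"
  shows "cone B b = (\<lambda>x. b *\<^sub>R x + 0) ` cone B 1"
proof (intro set_eqI iffI)
  fix x assume x: "x \<in> cone B b"
  have "x = b *\<^sub>R ((1/b) *\<^sub>R x) + 0" using assms by simp
  moreover have "(1/b) *\<^sub>R x \<in> cone B 1"
    using x assms by (auto simp: cone_def radial_proj_scaleR field_simps)
  ultimately show "x \<in> (\<lambda>x. b *\<^sub>R x + 0) ` cone B 1" by blast
next
  fix x assume "x \<in> (\<lambda>x. b *\<^sub>R x + 0) ` cone B 1"
  then obtain y where y: "y \<in> cone B 1" "x = b *\<^sub>R y" by auto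
  then show "x \<in> cone B b" using assms
    by (auto simp: cone_def radial_proj_scaleR mult_left_le)
qed

lemma emeasure_cone_scale:
  assumes B: "B \<in> sets (restrict_space borel (sphere (0::real^'n) 1))" and b: "b > 0"
  shows "emeasure lborel (cone B b) = ennreal (b ^ CARD('n)) * emeasure lborel (cone B 1)"
proof -
  have "emeasure lborel (cone B b) = emeasure lebesgue (cone B b)"
    using sets_cone[OF B] by simp
  also have "\<dots> = emeasure lebesgue ((\<lambda>x. b *\<^sub>R x + 0) ` cone B 1)"
    by (rule arg_cong[where f="emeasure lebesgue"], rule cone_eq_scaleR_image[OF b])
  also have "\<dots> = \<bar>b\<bar> ^ DIM(real^'n) * emeasure lebesgue (cone B 1)"
    by (rule emeasure_lebesgue_affine)
  also have "\<dots> = ennreal (b ^ CARD('n)) * emeasure lborel (cone B 1)"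
    using sets_cone[OF B] b by simp
  finally show ?thesis .
qed

definition radial_measure :: "nat \<Rightarrow> real measure" where
  "radial_measure n = density lborel (\<lambda>r. ennreal (indicator {0<..} r * r ^ (n - 1)))"

lemma sets_radial_measure[simp, measurable_cong]: "sets (radial_measure n) = sets borel"
  by (simp add: radial_measure_def)

lemma space_radial_measure[simp]: "space (radial_measure n) = UNIV"
  by (simp add: radial_measure_def)

lemma emeasure_radial_measure_atMost:
  assumes n: "n \<ge> 2"
  shows "emeasure (radial_measure n) {..b} = (if b \<le> 0 then 0 else ennreal (b ^ n / n))"
proof -
  have "emeasure (radial_measure n) {..b} = (\<integral>\<^sup>+ r. ennreal (indicator {0<..} r * r ^ (n - 1)) * indicator {..b} r \<partial>lborel)"
    unfolding radial_measure_def by (simp add: emeasure_density)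
  also have "\<dots> = (\<integral>\<^sup>+ r. ennreal (r ^ (n - 1) * indicator {0..b} r) \<partial>lborel)"
  proof (rule nn_integral_cong)
    fix r :: real
    show "ennreal (indicator {0<..} r * r ^ (n - 1)) * indicator {..b} r = ennreal (r ^ (n - 1) * indicator {0..b} r)"
      using n by (cases "r = 0") (auto simp: indicator_def)
  qed
  also have "\<dots> = (if b \<le> 0 then 0 else ennreal (b ^ n / n))"
  proof (cases "b \<le> 0")
    case True
    have "(\<integral>\<^sup>+ r. ennreal (r ^ (n - 1) * indicator {0..b} r) \<partial>lborel) = (\<integral>\<^sup>+ (r::real). 0 \<partial>lborel)"
      using True n by (intro nn_integral_cong) (auto simp: indicator_def)
    then show ?thesis using True by simp
  next
    case False
    have int: "integrable lborel (\<lambda>r. r ^ (n - 1) * indicator {0..b} r)"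
      by (rule borel_integrable_atLeastAtMost) auto
    have "(\<integral>\<^sup>+ r. ennreal (r ^ (n - 1) * indicator {0..b} r) \<partial>lborel) = ennreal (\<integral>r. r ^ (n - 1) * indicator {0..b} r \<partial>lborel)"
      by (rule nn_integral_eq_integral[OF int]) (auto simp: indicator_def)
    also have "(\<integral>r. r ^ (n - 1) * indicator {0..b} r \<partial>lborel) = (b ^ Suc (n - 1) - 0 ^ Suc (n - 1)) / Suc (n - 1)"
      using False by (intro integral_power) simp
    also have "\<dots> = b ^ n / n" using n by simp
    finally show ?thesis using False by simp
  qed
  finally show ?thesis .
qed

lemma sigma_finite_radial_measure:
  assumes n: "n \<ge> 2"
  shows "sigma_finite_measure (radial_measure n)"
proof
  show "\<exists>A. countable A \<and> A \<subseteq> sets (radial_measure n) \<and> \<Union> A = space (radial_measure n) \<and> (\<forall>a\<in>A. emeasure (radial_measure n) a \<noteq> \<infinity>)"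
  proof (intro exI[of _ "range (\<lambda>i::nat. {..real i})"] conjI)
    show "\<Union> (range (\<lambda>i::nat. {..real i})) = space (radial_measure n)"
      by (auto intro: real_arch_simple)
  qed (auto simp: emeasure_radial_measure_atMost[OF n])
qed

definition polar_coords :: "real^'n \<Rightarrow> real \<times> (real^'n)" where
  "polar_coords x = (norm x, radial_proj x)"

lemma measurable_polar_coords: "polar_coords \<in> borel \<rightarrow>\<^sub>M (borel \<Otimes>\<^sub>M restrict_space borel (sphere (0::real^'n) 1))"
  unfolding polar_coords_def by (intro measurable_Pair measurable_radial_proj_sphere) auto

lemma emeasure_sphere_measure_cone:
  assumes B: "B \<in> sets (sphere_measure :: (real^'n) measure)"
  shows "emeasure (sphere_measure :: (real^'n) measure) B = ennreal (real CARD('n)) * emeasure lborel (cone B 1)"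
proof -
  have "{x::real^'n. x \<noteq> 0 \<and> norm x \<le> 1 \<and> x /\<^sub>R norm x \<in> B} = cone B 1"
    by (auto simp: cone_def radial_proj_def)
  then show ?thesis using emeasure_sphere_measure[OF B] by simp
qed

lemma emeasure_sphere_finite: "emeasure (sphere_measure :: (real^'n) measure) (sphere 0 1) < \<infinity>"
proof -
  have s: "sphere (0::real^'n) 1 \<in> sets (sphere_measure :: (real^'n) measure)"
    using sets.top[of "sphere_measure :: (real^'n) measure"] by (simp add: space_sphere_measure)
  have "cone (sphere 0 1) 1 \<subseteq> cball (0::real^'n) 1" by (auto simp: cone_def)
  then have "emeasure lborel (cone (sphere (0::real^'n) 1) 1) \<le> emeasure lborel (cball (0::real^'n) 1)"
    by (intro emeasure_mono) auto
  also have "\<dots> < \<infinity>" using emeasure_bounded_finite[of "cball (0::real^'n) 1"] by simp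
  finally show ?thesis using emeasure_sphere_measure_cone[OF s] by (simp add: ennreal_mult_less_top)
qed

lemma finite_measure_sphere_measure: "finite_measure (sphere_measure :: (real^'n) measure)"
  using emeasure_sphere_finite by (intro finite_measureI) (simp add: space_sphere_measure less_top)

lemma sets_vimage_radial_proj:
  assumes "B \<in> sets (restrict_space borel (sphere (0::real^'n) 1))"
  shows "radial_proj -` B \<in> sets (borel :: (real^'n) measure)"
  using measurable_sets[OF measurable_radial_proj_sphere assms] by simp

lemma emeasure_radial_proj_vimage_ball:
  assumes B: "B \<in> sets (restrict_space borel (sphere (0::real^'n) 1))"
  shows "emeasure lborel (radial_proj -` B \<inter> {x::real^'n. norm x \<le> b}) =
     (if b \<le> 0 then 0 else ennreal (b ^ CARD('n)) * emeasure lborel (cone B 1))"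
proof (cases "b \<le> 0")
  case True
  have "radial_proj -` B \<inter> {x::real^'n. norm x \<le> b} \<subseteq> {0}" using True
    by auto (metis norm_ge_zero norm_le_zero_iff order.trans)
  then have "emeasure lborel (radial_proj -` B \<inter> {x::real^'n. norm x \<le> b}) \<le> emeasure lborel {0::real^'n}"
    by (intro emeasure_mono) auto
  then show ?thesis using True by simp
next
  case False
  have S: "radial_proj -` B \<inter> {x::real^'n. norm x \<le> b} \<in> sets borel"
    using sets_vimage_radial_proj[OF B] by measurable
  have "emeasure lborel (radial_proj -` B \<inter> {x::real^'n. norm x \<le> b}) = emeasure lborel (cone B b)"
  proof (rule antisym)
    have "emeasure lborel (radial_proj -` B \<inter> {x::real^'n. norm x \<le> b}) \<le> emeasure lborel (cone B b \<union> {0})"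
      using sets_cone[OF B, of b] by (intro emeasure_mono) (auto simp: cone_def)
    also have "\<dots> = emeasure lborel (cone B b)"
      using sets_cone[OF B] by (intro emeasure_Un_null_set) auto
    finally show "emeasure lborel (radial_proj -` B \<inter> {x::real^'n. norm x \<le> b}) \<le> emeasure lborel (cone B b)" .
    show "emeasure lborel (cone B b) \<le> emeasure lborel (radial_proj -` B \<inter> {x::real^'n. norm x \<le> b})"
      using S by (intro emeasure_mono) (auto simp: cone_def)
  qed
  also have "\<dots> = ennreal (b ^ CARD('n)) * emeasure lborel (cone B 1)"
    using False by (intro emeasure_cone_scale[OF B]) auto
  finally show ?thesis using False by simp
qed

(* Both sides are measures in X that agree on the generating sets {..b}, since the Lebesgue
   measure of the truncated cone over B scales like b^n. *)
lemma emeasure_radial_proj_vimage_norm: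
  assumes n: "CARD('n) \<ge> 2" and B: "B \<in> sets (sphere_measure :: (real^'n) measure)"
    and A: "A \<in> sets borel"
  shows "emeasure lborel (radial_proj -` B \<inter> {x::real^'n. norm x \<in> A}) =
    emeasure (radial_measure CARD('n)) A * emeasure (sphere_measure :: (real^'n) measure) B"
proof -
  have B': "B \<in> sets (restrict_space borel (sphere (0::real^'n) 1))" using B sets_sphere_measure by auto
  define M1 where "M1 = density (radial_measure CARD('n)) (\<lambda>_. emeasure (sphere_measure :: (real^'n) measure) B)"
  define M2 where "M2 = distr (density lborel (indicator (radial_proj -` B) :: real^'n \<Rightarrow> ennreal)) borel norm"
  have cB: "radial_proj -` B \<in> sets (borel :: (real^'n) measure)" by (rule sets_vimage_radial_proj[OF B'])
  have M2_eval: "emeasure M2 X = emeasure lborel (radial_proj -` B \<inter> {x::real^'n. norm x \<in> X})" if X: "X \<in> sets borel" for X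
  proof -
    have nX: "norm -` X \<in> sets (borel :: (real^'n) measure)"
      using measurable_sets[of norm borel borel X] X by simp
    have "emeasure M2 X = (\<integral>\<^sup>+ x. indicator (radial_proj -` B) x * indicator (norm -` X) x \<partial>(lborel :: (real^'n) measure))"
      unfolding M2_def using X cB nX by (simp add: emeasure_distr emeasure_density)
    also have "\<dots> = (\<integral>\<^sup>+ x. indicator (radial_proj -` B \<inter> {x::real^'n. norm x \<in> X}) x \<partial>lborel)"
      by (intro nn_integral_cong) (auto simp: indicator_def)
    also have "\<dots> = emeasure lborel (radial_proj -` B \<inter> {x::real^'n. norm x \<in> X})"
    proof (rule nn_integral_indicator)
      have "radial_proj -` B \<inter> norm -` X \<in> sets (borel :: (real^'n) measure)" using cB nX by auto
      then show "radial_proj -` B \<inter> {x::real^'n. norm x \<in> X} \<in> sets lborel" by (simp add: vimage_def)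
    qed
    finally show ?thesis .
  qed
  have M1_eval: "emeasure M1 X = emeasure (sphere_measure :: (real^'n) measure) B * emeasure (radial_measure CARD('n)) X"
    if X: "X \<in> sets borel" for X
    unfolding M1_def using X by (simp add: emeasure_density_const)
  have "M1 = M2"
  proof (rule measure_eqI_generator_eq[where E="range atMost" and \<Omega>=UNIV and A="\<lambda>i::nat. {..real i}"])
    show "Int_stable (range atMost :: real set set)"
      by (auto simp: Int_stable_def)
    show "range atMost \<subseteq> Pow (UNIV :: real set)" by auto
    show "sets M1 = sigma_sets UNIV (range atMost)"
      unfolding M1_def by (simp add: borel_eq_atMost[where 'a=real])
    show "sets M2 = sigma_sets UNIV (range atMost)"
      unfolding M2_def by (simp add: borel_eq_atMost[where 'a=real])
    show "range (\<lambda>i::nat. {..real i}) \<subseteq> range atMost" by auto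
    show "(\<Union>i::nat. {..real i}) = UNIV" by (auto intro: real_arch_simple)
    show "emeasure M1 {..real i} \<noteq> \<infinity>" for i
      using finite_measure.emeasure_finite[OF finite_measure_sphere_measure[where 'n='n], of B] emeasure_radial_measure_atMost[OF n, of "real i"]
      by (simp add: M1_eval ennreal_mult_eq_top_iff)
  next
    fix X assume "X \<in> range (atMost :: real \<Rightarrow> real set)"
    then obtain b where X: "X = {..b}" by auto
    have "emeasure M2 X = (if b \<le> 0 then 0 else ennreal (b ^ CARD('n)) * emeasure lborel (cone B 1))"
      unfolding X by (simp add: M2_eval emeasure_radial_proj_vimage_ball[OF B'])
    also have "\<dots> = emeasure M1 X"
    proof (cases "b \<le> 0")
      case True then show ?thesis using n by (simp add: X M1_eval emeasure_radial_measure_atMost)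
    next
      case False
      have e: "ennreal (real CARD('n)) * ennreal (b ^ CARD('n) / real CARD('n)) = ennreal (b ^ CARD('n))"
        using n False by (simp flip: ennreal_mult)
      have "emeasure M1 X = ennreal (real CARD('n)) * emeasure lborel (cone B 1) * ennreal (b ^ CARD('n) / real CARD('n))"
        using False n by (simp add: X M1_eval emeasure_radial_measure_atMost emeasure_sphere_measure_cone[OF B])
      also have "\<dots> = (ennreal (real CARD('n)) * ennreal (b ^ CARD('n) / real CARD('n))) * emeasure lborel (cone B 1)"
        by (simp only: ac_simps)
      also have "\<dots> = ennreal (b ^ CARD('n)) * emeasure lborel (cone B 1)" by (simp only: e)
      finally show ?thesis using False by simp
    qed
    finally show "emeasure M1 X = emeasure M2 X" by simp
  qed
  then have "emeasure M1 A = emeasure M2 A" by simp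
  then show ?thesis using M1_eval[OF A] M2_eval[OF A] by (simp add: mult.commute)
qed

lemma radial_measure_times_sphere_measure:
  assumes n: "CARD('n) \<ge> 2"
  shows "radial_measure CARD('n) \<Otimes>\<^sub>M (sphere_measure :: (real^'n) measure) =
    distr lborel (borel \<Otimes>\<^sub>M restrict_space borel (sphere (0::real^'n) 1)) polar_coords"
proof (rule pair_measure_eqI)
  show "sigma_finite_measure (radial_measure CARD('n))" by (rule sigma_finite_radial_measure[OF n])
  show "sigma_finite_measure (sphere_measure :: (real^'n) measure)"
    using finite_measure_sphere_measure[where 'n='n] by (simp add: finite_measure_def)
  show "sets (radial_measure CARD('n) \<Otimes>\<^sub>M (sphere_measure :: (real^'n) measure)) =
    sets (distr lborel (borel \<Otimes>\<^sub>M restrict_space borel (sphere (0::real^'n) 1)) polar_coords)"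
    using sets_pair_measure_cong[OF sets_radial_measure[of "CARD('n)"] sets_sphere_measure[where 'n='n]] by simp
  fix A B
  assume A: "A \<in> sets (radial_measure CARD('n))" and B: "B \<in> sets (sphere_measure :: (real^'n) measure)"
  have "A \<times> B \<in> sets (borel \<Otimes>\<^sub>M restrict_space borel (sphere (0::real^'n) 1))"
    using A B sets_sphere_measure by auto
  then have "emeasure (distr lborel (borel \<Otimes>\<^sub>M restrict_space borel (sphere (0::real^'n) 1)) polar_coords) (A \<times> B)
     = emeasure lborel (polar_coords -` (A \<times> B) \<inter> space lborel)"
    using measurable_polar_coords by (intro emeasure_distr) auto
  also have "polar_coords -` (A \<times> B) \<inter> space lborel = radial_proj -` B \<inter> {x::real^'n. norm x \<in> A}"
    by (auto simp: polar_coords_def)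
  finally show "emeasure (radial_measure CARD('n)) A * emeasure (sphere_measure :: (real^'n) measure) B =
    emeasure (distr lborel (borel \<Otimes>\<^sub>M restrict_space borel (sphere (0::real^'n) 1)) polar_coords) (A \<times> B)"
    using emeasure_radial_proj_vimage_norm[OF n B] A by simp
qed

lemma measurable_polar_coords_inverse: "(\<lambda>(r, \<eta>). r *\<^sub>R \<eta>) \<in> (borel \<Otimes>\<^sub>M restrict_space borel (sphere (0::real^'n) 1)) \<rightarrow>\<^sub>M (borel :: (real^'n) measure)"
proof -
  have s: "snd \<in> (borel \<Otimes>\<^sub>M restrict_space borel (sphere (0::real^'n) 1)) \<rightarrow>\<^sub>M (borel :: (real^'n) measure)"
    by (rule measurable_compose[OF measurable_snd measurable_restrict_space1[OF measurable_id]])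
  have "(\<lambda>x. fst x *\<^sub>R snd x) \<in> (borel \<Otimes>\<^sub>M restrict_space borel (sphere (0::real^'n) 1)) \<rightarrow>\<^sub>M (borel :: (real^'n) measure)"
    using s by measurable
  then show ?thesis by (simp add: case_prod_beta')
qed

lemma nn_integral_polar_coords:
  assumes n: "CARD('n) \<ge> 2" and g: "g \<in> borel_measurable (borel :: (real^'n) measure)"
  shows "(\<integral>\<^sup>+ x. g x \<partial>lborel) =
    (\<integral>\<^sup>+ r. ennreal (indicator {0<..} r * r ^ (CARD('n) - 1)) * (\<integral>\<^sup>+ \<eta>. g (r *\<^sub>R \<eta>) \<partial>(sphere_measure :: (real^'n) measure)) \<partial>lborel)"
proof -
  let ?P = "borel \<Otimes>\<^sub>M restrict_space borel (sphere (0::real^'n) 1)"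
  define G where "G = (\<lambda>(r, \<eta>). g (r *\<^sub>R \<eta>))"
  have Gm: "G \<in> borel_measurable ?P"
    unfolding G_def using measurable_compose[OF measurable_polar_coords_inverse g] by (simp add: case_prod_beta')
  have Gm': "G \<in> borel_measurable (radial_measure CARD('n) \<Otimes>\<^sub>M (sphere_measure :: (real^'n) measure))"
    using Gm sets_pair_measure_cong[OF sets_radial_measure[of "CARD('n)"] sets_sphere_measure[where 'n='n]]
    by (simp cong: measurable_cong_sets)
  have pm: "polar_coords \<in> lborel \<rightarrow>\<^sub>M ?P" using measurable_polar_coords by simp
  have "(\<integral>\<^sup>+ x. g x \<partial>lborel) = (\<integral>\<^sup>+ x. G (polar_coords x) \<partial>lborel)"
    by (intro nn_integral_cong) (simp add: G_def polar_coords_def radial_proj_def)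
  also have "\<dots> = integral\<^sup>N (distr lborel ?P polar_coords) G"
    using Gm pm by (intro nn_integral_distr[symmetric]) auto
  also have "\<dots> = integral\<^sup>N (radial_measure CARD('n) \<Otimes>\<^sub>M (sphere_measure :: (real^'n) measure)) G"
    by (simp add: radial_measure_times_sphere_measure[OF n])
  also have "\<dots> = (\<integral>\<^sup>+ r. \<integral>\<^sup>+ \<eta>. G (r, \<eta>) \<partial>(sphere_measure :: (real^'n) measure) \<partial>radial_measure CARD('n))"
  proof -
    interpret S: finite_measure "sphere_measure :: (real^'n) measure" by (rule finite_measure_sphere_measure)
    show ?thesis by (rule S.nn_integral_fst[OF Gm', symmetric])
  qed
  also have "\<dots> = (\<integral>\<^sup>+ r. ennreal (indicator {0<..} r * r ^ (CARD('n) - 1)) * (\<integral>\<^sup>+ \<eta>. G (r, \<eta>) \<partial>(sphere_measure :: (real^'n) measure)) \<partial>lborel)"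
  proof -
    interpret S: finite_measure "sphere_measure :: (real^'n) measure" by (rule finite_measure_sphere_measure)
    have "(\<lambda>r. \<integral>\<^sup>+ \<eta>. G (r, \<eta>) \<partial>(sphere_measure :: (real^'n) measure)) \<in> borel_measurable (radial_measure CARD('n))"
      by (rule S.borel_measurable_nn_integral_fst[OF Gm'])
    then have m: "(\<lambda>r. \<integral>\<^sup>+ \<eta>. G (r, \<eta>) \<partial>(sphere_measure :: (real^'n) measure)) \<in> borel_measurable lborel"
      by simp
    show ?thesis unfolding radial_measure_def by (rule nn_integral_density) (use m in auto)
  qed
  finally show ?thesis by (simp add: G_def)
qed

section \<open>Powers in \<open>ennreal\<close> and Hoelder's inequality\<close>

lemma ennpow_ennreal: "x \<ge> 0 \<Longrightarrow> ennpow (ennreal x) a = ennreal (x powr a)"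
  by (simp add: ennpow_def)

lemma ennpow_top[simp]: "ennpow top a = top"
  by (simp add: ennpow_def)

lemma ennpow_zero[simp]: "ennpow 0 a = 0"
  by (simp add: ennpow_def)

lemma ennpow_one[simp]: "ennpow x 1 = x"
  by (cases x) (auto simp: ennpow_def)

lemma ennpow_eq_0_iff: "a > 0 \<Longrightarrow> ennpow x a = 0 \<longleftrightarrow> x = 0"
  by (cases x) (auto simp: ennpow_def ennreal_eq_0_iff)

lemma ennpow_mono: assumes "x \<le> y" "a \<ge> 0" shows "ennpow x a \<le> ennpow y a"
proof (cases "y = \<infinity>")
  case True then show ?thesis by simp
next
  case False
  then obtain yr where y: "y = ennreal yr" "yr \<ge> 0" by (cases y) auto
  have "x \<noteq> top" using assms False by (auto simp: top_unique)
  then obtain xr where x: "x = ennreal xr" "xr \<ge> 0" "xr \<le> yr" using assms y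
    by (cases x) auto
  show ?thesis using x y assms by (simp add: ennpow_ennreal powr_mono2)
qed

lemma ennpow_ennpow: assumes "a > 0" "b > 0" shows "ennpow (ennpow x a) b = ennpow x (a * b)"
  by (cases x) (auto simp: ennpow_def powr_powr)

lemma ennpow_pos: "x \<noteq> 0 \<Longrightarrow> x \<noteq> top \<Longrightarrow> ennpow x a = ennreal (enn2real x powr a) \<and> enn2real x powr a > 0"
  by (cases x) (auto simp: ennpow_def)

lemma ennpow_mult: assumes "a > 0" shows "ennpow (x * y) a = ennpow x a * ennpow y a"
proof (cases "x = top \<or> y = top")
  case True
  show ?thesis
  proof (cases "x = 0 \<or> y = 0")
    case True then show ?thesis by auto
  next
    case False
    show ?thesis
    proof (cases "x = top")
      case xt: True
      show ?thesis
      proof (cases "y = top")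
        case True then show ?thesis using xt by simp
      next
        case False then show ?thesis using xt \<open>\<not> (x = 0 \<or> y = 0)\<close> ennpow_pos[of y a]
          by (simp add: ennreal_top_mult)
      qed
    next
      case False
      then have yt: "y = top" using True by simp
      then show ?thesis using False \<open>\<not> (x = 0 \<or> y = 0)\<close> ennpow_pos[of x a]
        by (simp add: ennreal_mult_top)
    qed
  qed
next
  case False
  then obtain xr yr where "x = ennreal xr" "y = ennreal yr" "xr \<ge> 0" "yr \<ge> 0"
    by (cases x; cases y) auto
  then show ?thesis by (simp add: ennpow_ennreal ennreal_mult'[symmetric] powr_mult flip: ennreal_mult)
qed

lemma Youngs_inequality_ennreal:
  fixes p q :: real
  assumes pq: "p > 1" "q > 1" "1/p + 1/q = 1"
  shows "x * y \<le> ennreal (1/p) * ennpow x p + ennreal (1/q) * ennpow y q"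
proof (cases "x = \<infinity> \<or> y = \<infinity>")
  case True
  then show ?thesis
  proof
    assume x: "x = \<infinity>"
    show ?thesis
    proof (cases "y = 0")
      case True then show ?thesis by simp
    next
      case False
      have "ennreal (1/p) * ennpow x p = \<infinity>" using x pq by (simp add: ennreal_mult_top del: ennpow_top) (simp add: ennpow_def)
      then show ?thesis by simp
    qed
  next
    assume y: "y = \<infinity>"
    show ?thesis
    proof (cases "x = 0")
      case True then show ?thesis by simp
    next
      case False
      have "ennreal (1/q) * ennpow y q = \<infinity>" using y pq by (simp add: ennreal_mult_top del: ennpow_top) (simp add: ennpow_def)
      then show ?thesis by simp
    qed
  qed
next
  case False
  then obtain xr yr where xy: "x = ennreal xr" "y = ennreal yr" "xr \<ge> 0" "yr \<ge> 0"
    by (cases x; cases y) auto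
  have "xr * yr \<le> xr powr p / p + yr powr q / q"
    by (rule Youngs_inequality) (use pq xy in auto)
  then have le: "ennreal (xr * yr) \<le> ennreal (1/p * xr powr p + 1/q * yr powr q)"
    by (intro ennreal_leI) simp
  have "x * y = ennreal (xr * yr)" using xy by (simp add: ennreal_mult)
  also note le
  also have "ennreal (1/p * xr powr p + 1/q * yr powr q) = ennreal (1/p) * ennreal (xr powr p) + ennreal (1/q) * ennreal (yr powr q)"
    using pq by (subst ennreal_plus) (auto simp: ennreal_mult[symmetric])
  also have "\<dots> = ennreal (1/p) * ennpow x p + ennreal (1/q) * ennpow y q"
    using xy by (simp add: ennpow_ennreal)
  finally show ?thesis .
qed

lemma nn_integral_mult_eq_0_if_ennpow:
  fixes f g :: "'a \<Rightarrow> ennreal"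
  assumes "p > 0" and f: "f \<in> borel_measurable M" and g: "g \<in> borel_measurable M"
    and "(\<integral>\<^sup>+ x. ennpow (f x) p \<partial>M) = 0"
  shows "(\<integral>\<^sup>+ x. f x * g x \<partial>M) = 0"
proof -
  have "(\<lambda>x. ennpow (f x) p) \<in> borel_measurable M"
    unfolding ennpow_def using f by measurable
  then have "AE x in M. ennpow (f x) p = 0" using assms(4) by (simp add: nn_integral_0_iff_AE)
  then have "AE x in M. f x * g x = 0"
    by eventually_elim (use assms(1) in \<open>simp add: ennpow_eq_0_iff\<close>)
  then show ?thesis using f g by (subst nn_integral_0_iff_AE) auto
qed

lemma Hoelder_inequality_ennreal:
  fixes p q :: real and f g :: "'a \<Rightarrow> ennreal"
  assumes pq: "p > 1" "q > 1" "1/p + 1/q = 1"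
    and f: "f \<in> borel_measurable M" and g: "g \<in> borel_measurable M"
  shows "(\<integral>\<^sup>+ x. f x * g x \<partial>M) \<le>
    ennpow (\<integral>\<^sup>+ x. ennpow (f x) p \<partial>M) (1/p) * ennpow (\<integral>\<^sup>+ x. ennpow (g x) q \<partial>M) (1/q)"
proof -
  define F where "F = (\<integral>\<^sup>+ x. ennpow (f x) p \<partial>M)"
  define G where "G = (\<integral>\<^sup>+ x. ennpow (g x) q \<partial>M)"
  have fpm: "(\<lambda>x. ennpow (f x) p) \<in> borel_measurable M"
    unfolding ennpow_def using f by measurable
  have gqm: "(\<lambda>x. ennpow (g x) q) \<in> borel_measurable M"
    unfolding ennpow_def using g by measurable
  show ?thesis
  proof (cases "F = 0 \<or> G = 0")
    case True
    then have "(\<integral>\<^sup>+ x. f x * g x \<partial>M) = 0"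
      using nn_integral_mult_eq_0_if_ennpow[OF _ f g, of p] nn_integral_mult_eq_0_if_ennpow[OF _ g f, of q] pq
      by (auto simp: F_def G_def mult.commute)
    then show ?thesis by simp
  next
    case nz: False
    show ?thesis
    proof (cases "F = \<infinity> \<or> G = \<infinity>")
      case True
      have "ennpow F (1/p) \<noteq> 0" "ennpow G (1/q) \<noteq> 0" using nz pq by (auto simp: ennpow_eq_0_iff)
      then have "ennpow F (1/p) * ennpow G (1/q) = \<infinity>" using True
        by (auto simp: ennreal_mult_eq_top_iff)
      then show ?thesis by (simp add: F_def G_def)
    next
      case False
      then obtain Fr Gr where FG: "F = ennreal Fr" "G = ennreal Gr" "Fr > 0" "Gr > 0"
        using nz by (cases F; cases G) (auto simp: ennreal_eq_0_iff)
      define a where "a = Fr powr (1/p)"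
      define b where "b = Gr powr (1/q)"
      have ab: "a > 0" "b > 0" using FG by (auto simp: a_def b_def)
      have ap: "a powr p = Fr" using FG pq by (simp add: a_def powr_powr)
      have bq: "b powr q = Gr" using FG pq by (simp add: b_def powr_powr)
      have pt: "f x * g x * ennreal (1 / (a * b)) \<le>
          ennreal (1/p) * (ennpow (f x) p * ennreal ((1/a) powr p)) + ennreal (1/q) * (ennpow (g x) q * ennreal ((1/b) powr q))" for x
      proof -
        have "f x * g x * ennreal (1 / (a * b)) = (f x * ennreal (1/a)) * (g x * ennreal (1/b))"
        proof -
          have "ennreal (1 / (a * b)) = ennreal (1/a) * ennreal (1/b)"
            using ab by (simp add: ennreal_mult[symmetric])
          then show ?thesis by (simp add: mult_ac)
        qed
        also have "\<dots> \<le> ennreal (1/p) * ennpow (f x * ennreal (1/a)) p + ennreal (1/q) * ennpow (g x * ennreal (1/b)) q"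
          by (rule Youngs_inequality_ennreal[OF pq])
        also have "\<dots> = ennreal (1/p) * (ennpow (f x) p * ennreal ((1/a) powr p)) + ennreal (1/q) * (ennpow (g x) q * ennreal ((1/b) powr q))"
          using pq ab by (simp add: ennpow_mult ennpow_ennreal)
        finally show ?thesis .
      qed
      have "(\<integral>\<^sup>+ x. f x * g x \<partial>M) * ennreal (1 / (a * b)) = (\<integral>\<^sup>+ x. f x * g x * ennreal (1 / (a * b)) \<partial>M)"
        using f g by (simp add: nn_integral_multc)
      also have "\<dots> \<le> (\<integral>\<^sup>+ x. ennreal (1/p) * (ennpow (f x) p * ennreal ((1/a) powr p)) + ennreal (1/q) * (ennpow (g x) q * ennreal ((1/b) powr q)) \<partial>M)"
        by (intro nn_integral_mono pt)
      also have "\<dots> = ennreal (1/p) * (F * ennreal ((1/a) powr p)) + ennreal (1/q) * (G * ennreal ((1/b) powr q))"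
        using fpm gqm by (simp add: nn_integral_add nn_integral_cmult nn_integral_multc F_def G_def)
      also have "\<dots> = ennreal (1/p * (Fr * (1/a) powr p) + 1/q * (Gr * (1/b) powr q))"
      proof -
        have "ennreal (1/p) * (F * ennreal ((1/a) powr p)) = ennreal (1/p * (Fr * (1/a) powr p))"
          using FG pq by (simp add: ennreal_mult[symmetric])
        moreover have "ennreal (1/q) * (G * ennreal ((1/b) powr q)) = ennreal (1/q * (Gr * (1/b) powr q))"
          using FG pq by (simp add: ennreal_mult[symmetric])
        ultimately show ?thesis using FG pq by (simp add: ennreal_plus)
      qed
      also have "1/p * (Fr * (1/a) powr p) + 1/q * (Gr * (1/b) powr q) = 1"
        using ab FG pq by (simp add: powr_divide ap bq)
      finally have le: "(\<integral>\<^sup>+ x. f x * g x \<partial>M) * ennreal (1 / (a * b)) \<le> 1" by simp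
      have "(\<integral>\<^sup>+ x. f x * g x \<partial>M) = (\<integral>\<^sup>+ x. f x * g x \<partial>M) * ennreal (1 / (a * b)) * ennreal (a * b)"
      proof -
        have "ennreal (1 / (a * b)) * ennreal (a * b) = 1"
          using ab by (simp add: ennreal_mult[symmetric])
        then show ?thesis by (simp add: mult.assoc)
      qed
      also have "\<dots> \<le> 1 * ennreal (a * b)"
        by (intro mult_right_mono le) auto
      also have "\<dots> = ennpow F (1/p) * ennpow G (1/q)"
        using FG ab by (simp add: ennpow_ennreal a_def b_def ennreal_mult)
      finally show ?thesis by (simp add: F_def G_def)
    qed
  qed
qed

section \<open>Local A_p weights\<close>

lemma set_integral_mono_subset:
  fixes h :: "real \<Rightarrow> real"
  assumes int: "set_integrable lborel E h" and sub: "E' \<subseteq> E" and E': "E' \<in> sets borel"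
    and nn: "\<And>x. x \<in> E \<Longrightarrow> 0 \<le> h x"
  shows "set_integrable lborel E' h" "(LINT x:E'|lborel. h x) \<le> (LINT x:E|lborel. h x)"
proof -
  show i': "set_integrable lborel E' h" using set_integrable_subset[OF int _ sub] E' by simp
  show "(LINT x:E'|lborel. h x) \<le> (LINT x:E|lborel. h x)"
    using i' int sub nn unfolding set_lebesgue_integral_def set_integrable_def
    by (intro integral_mono) (auto simp: indicator_def)
qed

lemma set_integral_nonneg_real:
  fixes h :: "real \<Rightarrow> real"
  assumes nn: "\<And>x. x \<in> E \<Longrightarrow> 0 \<le> h x"
  shows "0 \<le> (LINT x:E|lborel. h x)"
  unfolding set_lebesgue_integral_def
  by (intro integral_nonneg_AE) (auto simp: indicator_def nn)

lemma set_integral_pos_interval: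
  fixes h :: "real \<Rightarrow> real"
  assumes int: "set_integrable lborel {a<..<b} h" and ab: "a < b"
    and pos: "\<And>x. x \<in> {a<..<b} \<Longrightarrow> 0 < h x"
  shows "0 < (LINT x:{a<..<b}|lborel. h x)"
proof -
  have nn: "0 \<le> (LINT x:{a<..<b}|lborel. h x)" using pos by (intro set_integral_nonneg_real) (auto intro: less_imp_le)
  have "(LINT x:{a<..<b}|lborel. h x) \<noteq> 0"
  proof
    assume "(LINT x:{a<..<b}|lborel. h x) = 0"
    then have "AE x in lborel. indicator {a<..<b} x *\<^sub>R h x = 0"
      using int pos unfolding set_lebesgue_integral_def set_integrable_def
      by (subst (asm) integral_nonneg_eq_0_iff_AE) (auto simp: indicator_def intro: less_imp_le)
    then have "AE x in lborel. x \<notin> {a<..<b}"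
      by eventually_elim (auto simp: indicator_def, metis greaterThanLessThan_iff less_irrefl pos)
    then have "emeasure lborel {a<..<b} = 0"
      by (subst (asm) AE_iff_measurable[of "{a<..<b}"]) auto
    then show False using ab by simp
  qed
  then show ?thesis using nn by simp
qed

lemma set_integral_le_const:
  fixes h :: "real \<Rightarrow> real"
  assumes int: "set_integrable lborel {a<..<b} h" and ab: "a \<le> b"
    and le: "\<And>x. x \<in> {a<..<b} \<Longrightarrow> h x \<le> c"
  shows "(LINT x:{a<..<b}|lborel. h x) \<le> c * (b - a)"
proof -
  have ic: "set_integrable lborel {a<..<b} (\<lambda>_. c)"
    unfolding set_integrable_def using ab by (intro integrable_scaleR_left integrable_real_indicator) auto
  have "(LINT x:{a<..<b}|lborel. h x) \<le> (LINT x:{a<..<b}|lborel. c)"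
    by (rule set_integral_mono[OF int ic le])
  also have "\<dots> = c * (b - a)" using ab by (subst set_integral_const) auto
  finally show ?thesis .
qed

lemma set_integral_ge_const:
  fixes h :: "real \<Rightarrow> real"
  assumes int: "set_integrable lborel {a<..<b} h" and ab: "a \<le> b"
    and le: "\<And>x. x \<in> {a<..<b} \<Longrightarrow> c \<le> h x"
  shows "c * (b - a) \<le> (LINT x:{a<..<b}|lborel. h x)"
proof -
  have ic: "set_integrable lborel {a<..<b} (\<lambda>_. c)"
    unfolding set_integrable_def using ab by (intro integrable_scaleR_left integrable_real_indicator) auto
  have "c * (b - a) = (LINT x:{a<..<b}|lborel. c)" using ab by (subst set_integral_const) auto
  also have "\<dots> \<le> (LINT x:{a<..<b}|lborel. h x)"
    by (rule set_integral_mono[OF ic int le])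
  finally show ?thesis .
qed

lemma set_integrable_power_interval: "set_integrable lborel {a<..<b} (\<lambda>r::real. r ^ k)"
proof -
  have "set_integrable lborel {a..b} (\<lambda>r::real. r ^ k)"
    unfolding set_integrable_def by (intro borel_integrable_compact) (auto intro: continuous_intros)
  then show ?thesis by (rule set_integrable_subset) auto
qed

lemma mu_meas_pos: "0 \<le> a \<Longrightarrow> a < b \<Longrightarrow> 0 < mu_meas N {a<..<b}"
  unfolding mu_meas_def by (intro set_integral_pos_interval set_integrable_power_interval) auto

lemma mu_meas_enlarge_le:
  assumes a: "0 \<le> a" and N: "N \<ge> 1"
  shows "mu_meas N {a<..<a+3/4} \<le> 3 ^ N * mu_meas N {a<..<a+1/2}"
proof -
  have "mu_meas N {a<..<a+3/4} \<le> (a+3/4) ^ (N - 1) * (a + 3/4 - a)"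
    unfolding mu_meas_def using a by (intro set_integral_le_const set_integrable_power_interval power_mono) auto
  also have "\<dots> \<le> (3 * (a+1/4)) ^ (N - 1) * (3 * (1/4))"
    using a by (intro mult_mono power_mono) auto
  also have "\<dots> = 3 ^ N * ((a+1/4) ^ (N - 1) * (a + 1/2 - (a + 1/4)))"
  proof (cases N)
    case 0 then show ?thesis using N by simp
  next
    case (Suc m)
    have "(3 * (a+1/4)) ^ m = 3 ^ m * (a + 1/4) ^ m" by (rule power_mult_distrib)
    then show ?thesis using Suc by (simp add: algebra_simps)
  qed
  also have "\<dots> \<le> 3 ^ N * mu_meas N {a+1/4<..<a+1/2}"
    unfolding mu_meas_def using a by (intro mult_left_mono set_integral_ge_const set_integrable_power_interval power_mono) auto
  also have "\<dots> \<le> 3 ^ N * mu_meas N {a<..<a+1/2}"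
    unfolding mu_meas_def using a
    by (intro mult_left_mono set_integral_mono_subset(2)[OF set_integrable_power_interval]) auto
  finally show ?thesis .
qed

lemma conjugate_weight_powr_cancel:
  fixes p q x y :: real
  assumes p: "p > 1" and q: "1/p + 1/q = 1" and xy: "x > 0" "y > 0"
  shows "(x * y) powr (1/p) * (x powr (- 1 / (p - 1)) * y) powr (1/q) = y"
proof -
  have "1/q = (p - 1) / p" using p q by (simp add: field_simps)
  then have e: "- 1 / (p - 1) * (1/q) = - (1/p)" using p by simp
  have "(x * y) powr (1/p) * (x powr (- 1 / (p - 1)) * y) powr (1/q)
      = (x powr (1/p) * x powr (- 1 / (p - 1) * (1/q))) * (y powr (1/p) * y powr (1/q))"
    using xy by (simp add: powr_mult powr_powr)
  also have "\<dots> = y"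
    unfolding e using xy q by (simp add: powr_minus flip: powr_add)
  finally show ?thesis .
qed

locale local_Ap_weight =
  fixes N :: nat and p :: real and w :: "real \<Rightarrow> real" and C :: real
  assumes N: "N \<ge> 2" and p: "1 \<le> p"
    and wmeas: "(\<lambda>r. indicator {0<..} r * w r) \<in> borel_measurable lborel"
    and wpos: "\<And>r. r > 0 \<Longrightarrow> w r > 0"
    and Cond: "\<And>a b. 0 \<le> a \<Longrightarrow> a < b \<Longrightarrow> b - a \<le> 1 \<Longrightarrow>
        (if p = 1 then
           set_integrable lborel {a<..<b} (\<lambda>r. w r * r ^ (N - 1)) \<and>
           (AE r in lborel. r \<in> {a<..<b} \<longrightarrow>
              (1 / mu_meas N {a<..<b}) * (\<integral>r\<in>{a<..<b}. w r * r ^ (N - 1) \<partial>lborel) \<le> C * w r)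
         else
           set_integrable lborel {a<..<b} (\<lambda>r. w r * r ^ (N - 1)) \<and>
           set_integrable lborel {a<..<b} (\<lambda>r. w r powr (- 1 / (p - 1)) * r ^ (N - 1)) \<and>
           ((1 / mu_meas N {a<..<b}) * (\<integral>r\<in>{a<..<b}. w r * r ^ (N - 1) \<partial>lborel)) *
           ((1 / mu_meas N {a<..<b}) * (\<integral>r\<in>{a<..<b}. w r powr (- 1 / (p - 1)) * r ^ (N - 1) \<partial>lborel))
              powr (p - 1) \<le> C)"
begin

definition "weight_mass a b = (LINT r:{a<..<b}|lborel. w r * r ^ (N - 1))"
definition "dual_mass a b = (LINT r:{a<..<b}|lborel. w r powr (- 1 / (p - 1)) * r ^ (N - 1))"
definition "mu_mass a b = mu_meas N {a<..<b}"

lemma set_integrable_weight: "0 \<le> a \<Longrightarrow> a < b \<Longrightarrow> b - a \<le> 1 \<Longrightarrow> set_integrable lborel {a<..<b} (\<lambda>r. w r * r ^ (N - 1))"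
  using Cond[of a b] by (auto split: if_splits)

lemma set_integrable_dual_weight: "p \<noteq> 1 \<Longrightarrow> 0 \<le> a \<Longrightarrow> a < b \<Longrightarrow> b - a \<le> 1 \<Longrightarrow>
   set_integrable lborel {a<..<b} (\<lambda>r. w r powr (- 1 / (p - 1)) * r ^ (N - 1))"
  using Cond[of a b] by (auto split: if_splits)

lemma weight_mass_pos: "0 \<le> a \<Longrightarrow> a < b \<Longrightarrow> b - a \<le> 1 \<Longrightarrow> 0 < weight_mass a b"
  unfolding weight_mass_def by (intro set_integral_pos_interval set_integrable_weight) (auto intro!: mult_pos_pos wpos)

lemma dual_mass_pos: assumes "p \<noteq> 1" "0 \<le> a" "a < b" "b - a \<le> 1" shows "0 < dual_mass a b"
proof -
  have wp: "\<And>r. r \<in> {a<..<b} \<Longrightarrow> 0 < w r" using assms by (intro wpos) auto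
  have "\<And>r. r \<in> {a<..<b} \<Longrightarrow> 0 < w r powr (- 1 / (p - 1)) * r ^ (N - 1)"
    using assms wp by (intro mult_pos_pos) (auto, metis less_irrefl wp greaterThanLessThan_iff)
  then show ?thesis unfolding dual_mass_def using assms by (intro set_integral_pos_interval set_integrable_dual_weight) auto
qed

lemma mu_mass_pos: "0 \<le> a \<Longrightarrow> a < b \<Longrightarrow> 0 < mu_mass a b"
  unfolding mu_mass_def by (rule mu_meas_pos)

lemma weight_mass_mono: "0 \<le> a \<Longrightarrow> a \<le> a' \<Longrightarrow> a' < b' \<Longrightarrow> b' \<le> b \<Longrightarrow> b - a \<le> 1 \<Longrightarrow> weight_mass a' b' \<le> weight_mass a b"
  unfolding weight_mass_def by (rule set_integral_mono_subset(2)[OF set_integrable_weight]) (auto intro!: mult_nonneg_nonneg less_imp_le[OF wpos])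

lemma dual_mass_mono: "p \<noteq> 1 \<Longrightarrow> 0 \<le> a \<Longrightarrow> a \<le> a' \<Longrightarrow> a' < b' \<Longrightarrow> b' \<le> b \<Longrightarrow> b - a \<le> 1 \<Longrightarrow> dual_mass a' b' \<le> dual_mass a b"
  unfolding dual_mass_def by (rule set_integral_mono_subset(2)[OF set_integrable_dual_weight]) (auto intro!: mult_nonneg_nonneg)

lemma Ap_condition: "p \<noteq> 1 \<Longrightarrow> 0 \<le> a \<Longrightarrow> a < b \<Longrightarrow> b - a \<le> 1 \<Longrightarrow>
   ((1 / mu_mass a b) * weight_mass a b) * ((1 / mu_mass a b) * dual_mass a b) powr (p - 1) \<le> C"
  using Cond[of a b] unfolding weight_mass_def dual_mass_def mu_mass_def by (auto split: if_splits)

lemma A1_condition: "p = 1 \<Longrightarrow> 0 \<le> a \<Longrightarrow> a < b \<Longrightarrow> b - a \<le> 1 \<Longrightarrow>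
   AE r in lborel. r \<in> {a<..<b} \<longrightarrow> (1 / mu_mass a b) * weight_mass a b \<le> C * w r"
  using Cond[of a b] unfolding weight_mass_def mu_mass_def by (auto split: if_splits)

lemma indicator_interval_weight_eq: fixes h :: "real \<Rightarrow> real \<Rightarrow> real" shows "0 \<le> a \<Longrightarrow> indicator {a<..<b} r * h (w r) r = indicator {a<..<b} r * h (indicator {0<..} r * w r) r"
  by (auto simp: indicator_def)

lemma borel_measurable_weight_on_interval:
  fixes h :: "real \<Rightarrow> real \<Rightarrow> real"
  assumes "0 \<le> a" and m: "(\<lambda>r. h (indicator {0<..} r * w r) r) \<in> borel_measurable lborel"
  shows "(\<lambda>r. indicator {a<..<b} r * h (w r) r) \<in> borel_measurable lborel"
proof -
  have "(\<lambda>r. indicator {a<..<b} r * h (indicator {0<..} r * w r) r) \<in> borel_measurable lborel"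
    using m by (intro borel_measurable_times borel_measurable_indicator) auto
  moreover have "(\<lambda>r. indicator {a<..<b} r * h (indicator {0<..} r * w r) r) = (\<lambda>r. indicator {a<..<b} r * h (w r) r)"
    by (intro ext) (metis indicator_interval_weight_eq[OF assms(1)])
  ultimately show ?thesis by simp
qed

lemma nn_integral_weight_interval: assumes "0 \<le> a" "a < b" "b - a \<le> 1"
  shows "(\<integral>\<^sup>+ r. ennreal (indicator {a<..<b} r * (w r * r ^ (N - 1))) \<partial>lborel) = ennreal (weight_mass a b)"
proof -
  have "(\<integral>\<^sup>+ r. ennreal (indicator {a<..<b} r * (w r * r ^ (N - 1))) \<partial>lborel) =
      ennreal (\<integral>r. indicator {a<..<b} r * (w r * r ^ (N - 1)) \<partial>lborel)"
    using set_integrable_weight[OF assms] assms wpos unfolding set_integrable_def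
    by (intro nn_integral_eq_integral) (auto simp: indicator_def intro!: mult_nonneg_nonneg less_imp_le)
  then show ?thesis by (simp add: weight_mass_def set_lebesgue_integral_def)
qed

lemma nn_integral_dual_weight_interval: assumes "p \<noteq> 1" "0 \<le> a" "a < b" "b - a \<le> 1"
  shows "(\<integral>\<^sup>+ r. ennreal (indicator {a<..<b} r * (w r powr (- 1 / (p - 1)) * r ^ (N - 1))) \<partial>lborel) = ennreal (dual_mass a b)"
proof -
  have "(\<integral>\<^sup>+ r. ennreal (indicator {a<..<b} r * (w r powr (- 1 / (p - 1)) * r ^ (N - 1))) \<partial>lborel) =
      ennreal (\<integral>r. indicator {a<..<b} r * (w r powr (- 1 / (p - 1)) * r ^ (N - 1)) \<partial>lborel)"
    using set_integrable_dual_weight[OF assms] assms unfolding set_integrable_def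
    by (intro nn_integral_eq_integral) (auto simp: indicator_def)
  then show ?thesis by (simp add: dual_mass_def set_lebesgue_integral_def)
qed

lemma mu_mass_powr_le:
  assumes p1: "p \<noteq> 1" and ab: "0 \<le> a" "a < b" "b - a \<le> 1"
  shows "mu_mass a b powr p \<le> weight_mass a b * dual_mass a b powr (p - 1)"
proof -
  have pp: "p > 1" using p p1 by simp
  define q where "q = p / (p - 1)"
  have q: "q > 1" "1/p + 1/q = 1" using pp by (auto simp: q_def field_simps)
  define f where "f r = ennreal (indicator {a<..<b} r * (w r * r ^ (N - 1)) powr (1/p))" for r
  define g where "g r = ennreal (indicator {a<..<b} r * (w r powr (- 1 / (p - 1)) * r ^ (N - 1)) powr (1/q))" for r
  have w0m: "(\<lambda>r. indicator {0<..} r * w r) \<in> borel_measurable lborel" by (rule wmeas)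
  have fm: "f \<in> borel_measurable lborel"
  proof -
    have "(\<lambda>r. indicator {a<..<b} r * (\<lambda>x r. (x * r ^ (N - 1)) powr (1/p)) (w r) r) \<in> borel_measurable lborel"
      by (rule borel_measurable_weight_on_interval[OF ab(1)]) (use w0m in measurable)
    then show ?thesis unfolding f_def by simp
  qed
  have gm: "g \<in> borel_measurable lborel"
  proof -
    have "(\<lambda>r. indicator {a<..<b} r * (\<lambda>x r. (x powr (- 1 / (p - 1)) * r ^ (N - 1)) powr (1/q)) (w r) r) \<in> borel_measurable lborel"
      by (rule borel_measurable_weight_on_interval[OF ab(1)]) (use w0m in measurable)
    then show ?thesis unfolding g_def by simp
  qed
  have fg: "f r * g r = ennreal (indicator {a<..<b} r * r ^ (N - 1))" for r
  proof (cases "r \<in> {a<..<b}")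
    case True
    then have r: "r > 0" "w r > 0" using ab wpos by auto
    then show ?thesis
      using conjugate_weight_powr_cancel[OF pp q(2) r(2), of "r ^ (N - 1)"] True
      by (simp add: f_def g_def ennreal_mult[symmetric])
  qed (auto simp: f_def g_def indicator_def)
  have fp: "ennpow (f r) p = ennreal (indicator {a<..<b} r * (w r * r ^ (N - 1)))" for r
  proof (cases "r \<in> {a<..<b}")
    case True
    then have r: "r > 0" "w r > 0" using ab wpos by auto
    then show ?thesis using True pp by (simp add: f_def ennpow_ennreal powr_powr)
  qed (auto simp: f_def indicator_def)
  have gq: "ennpow (g r) q = ennreal (indicator {a<..<b} r * (w r powr (- 1 / (p - 1)) * r ^ (N - 1)))" for r
  proof (cases "r \<in> {a<..<b}")
    case True
    then have r: "r > 0" "w r > 0" using ab wpos by auto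
    then show ?thesis using True q by (simp add: g_def ennpow_ennreal powr_powr)
  qed (auto simp: g_def indicator_def)
  have eqM: "(\<integral>\<^sup>+ r. f r * g r \<partial>lborel) = ennreal (mu_mass a b)"
  proof -
    have "(\<integral>\<^sup>+ r. f r * g r \<partial>lborel) = ennreal (\<integral>r. indicator {a<..<b} r * r ^ (N - 1) \<partial>lborel)"
      unfolding fg using set_integrable_power_interval[of a b "N - 1"] ab unfolding set_integrable_def
      by (intro nn_integral_eq_integral) (auto simp: indicator_def)
    then show ?thesis by (simp add: mu_mass_def mu_meas_def set_lebesgue_integral_def)
  qed
  have "ennreal (mu_mass a b) \<le> ennpow (ennreal (weight_mass a b)) (1/p) * ennpow (ennreal (dual_mass a b)) (1/q)"
    using Hoelder_inequality_ennreal[OF pp q fm gm]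
    unfolding fp gq eqM nn_integral_weight_interval[OF ab] nn_integral_dual_weight_interval[OF p1 ab] .
  also have "\<dots> = ennreal (weight_mass a b powr (1/p) * dual_mass a b powr (1/q))"
    using weight_mass_pos[OF ab] dual_mass_pos[OF p1 ab] by (simp add: ennpow_ennreal ennreal_mult)
  finally have le: "mu_mass a b \<le> weight_mass a b powr (1/p) * dual_mass a b powr (1/q)"
    using weight_mass_pos[OF ab] dual_mass_pos[OF p1 ab] by (simp add: ennreal_le_iff)
  have "mu_mass a b powr p \<le> (weight_mass a b powr (1/p) * dual_mass a b powr (1/q)) powr p"
    using le mu_mass_pos[OF ab(1,2)] pp by (intro powr_mono2) auto
  also have "\<dots> = weight_mass a b * dual_mass a b powr (p - 1)"
  proof -
    have e1: "1/p * p = 1" and e2: "1/q * p = p - 1" using pp by (auto simp: q_def field_simps)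
    have "(weight_mass a b powr (1/p) * dual_mass a b powr (1/q)) powr p = (weight_mass a b powr (1/p)) powr p * (dual_mass a b powr (1/q)) powr p"
      using weight_mass_pos[OF ab] dual_mass_pos[OF p1 ab] by (simp add: powr_mult)
    also have "\<dots> = weight_mass a b powr (1/p * p) * dual_mass a b powr (1/q * p)" by (simp only: powr_powr)
    also have "\<dots> = weight_mass a b powr 1 * dual_mass a b powr (p - 1)" by (simp only: e1 e2)
    also have "\<dots> = weight_mass a b * dual_mass a b powr (p - 1)" using weight_mass_pos[OF ab] by simp
    finally show ?thesis .
  qed
  finally show ?thesis .
qed

lemma Ap_condition_scaled: assumes p1: "p \<noteq> 1" and ab: "0 \<le> a" "a < b" "b - a \<le> 1"
  shows "weight_mass a b * dual_mass a b powr (p - 1) \<le> C * mu_mass a b powr p"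
proof -
  have m: "mu_mass a b > 0" using mu_mass_pos ab by auto
  have y: "dual_mass a b > 0" using dual_mass_pos[OF p1 ab] .
  have "weight_mass a b * dual_mass a b powr (p - 1) = ((1 / mu_mass a b) * weight_mass a b) * ((1 / mu_mass a b) * dual_mass a b) powr (p - 1) * mu_mass a b powr p"
  proof -
    have "((1 / mu_mass a b) * dual_mass a b) powr (p - 1) = dual_mass a b powr (p - 1) / mu_mass a b powr (p - 1)"
      using m y by (simp add: powr_divide)
    moreover have "mu_mass a b powr p = mu_mass a b * mu_mass a b powr (p - 1)"
    proof -
      have "mu_mass a b powr p = mu_mass a b powr (1 + (p - 1))" by simp
      also have "\<dots> = mu_mass a b powr 1 * mu_mass a b powr (p - 1)" by (rule powr_add)
      finally show ?thesis using m by simp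
    qed
    ultimately show ?thesis using m by (simp add: field_simps)
  qed
  also have "\<dots> \<le> C * mu_mass a b powr p"
    using Ap_condition[OF p1 ab] by (intro mult_right_mono) auto
  finally show ?thesis .
qed

lemma Ap_const_pos: assumes "p \<noteq> 1" shows "C > 0"
proof -
  have "0 < weight_mass 0 1 * dual_mass 0 1 powr (p - 1)" using weight_mass_pos[of 0 1] dual_mass_pos[OF assms, of 0 1] by simp
  also have "\<dots> \<le> C * mu_mass 0 1 powr p" by (rule Ap_condition_scaled[OF assms]) auto
  finally show ?thesis using mu_mass_pos[of 0 1] by (simp add: zero_less_mult_iff)
qed

lemma weight_mass_le_subinterval:
  assumes p1: "p \<noteq> 1" and ab: "0 \<le> a" "a \<le> a'" "a' < b'" "b' \<le> b" "b - a \<le> 1"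
  shows "weight_mass a b \<le> C * (mu_mass a b / mu_mass a' b') powr p * weight_mass a' b'"
proof -
  have ab1: "0 \<le> a" "a < b" "b - a \<le> 1" using ab by auto
  have ab2: "0 \<le> a'" "a' < b'" "b' - a' \<le> 1" using ab by auto
  have m: "mu_mass a b > 0" "mu_mass a' b' > 0" using mu_mass_pos ab1 ab2 by auto
  have x: "weight_mass a b > 0" "weight_mass a' b' > 0" using weight_mass_pos ab1 ab2 by auto
  have y: "dual_mass a b > 0" "dual_mass a' b' > 0" using dual_mass_pos[OF p1] ab1 ab2 by auto
  have yy: "dual_mass a' b' powr (p - 1) \<le> dual_mass a b powr (p - 1)"
    using dual_mass_mono[OF p1 ab] y p by (intro powr_mono2) auto
  have "weight_mass a b * mu_mass a' b' powr p \<le> weight_mass a b * (weight_mass a' b' * dual_mass a' b' powr (p - 1))"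
    using mu_mass_powr_le[OF p1 ab2] x by (intro mult_left_mono) auto
  also have "\<dots> \<le> weight_mass a' b' * (weight_mass a b * dual_mass a b powr (p - 1))"
    using yy x by (simp add: mult_left_mono mult.left_commute)
  also have "\<dots> \<le> weight_mass a' b' * (C * mu_mass a b powr p)"
    using Ap_condition_scaled[OF p1 ab1] x by (intro mult_left_mono) auto
  finally have "weight_mass a b * mu_mass a' b' powr p \<le> weight_mass a' b' * (C * mu_mass a b powr p)" .
  then show ?thesis using m by (simp add: powr_divide field_simps)
qed

lemma dual_mass_le_subinterval:
  assumes p1: "p \<noteq> 1" and ab: "0 \<le> a" "a \<le> a'" "a' < b'" "b' \<le> b" "b - a \<le> 1"
  shows "dual_mass a b powr (p - 1) \<le> C * (mu_mass a b / mu_mass a' b') powr p * dual_mass a' b' powr (p - 1)"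
proof -
  have ab1: "0 \<le> a" "a < b" "b - a \<le> 1" using ab by auto
  have ab2: "0 \<le> a'" "a' < b'" "b' - a' \<le> 1" using ab by auto
  have m: "mu_mass a b > 0" "mu_mass a' b' > 0" using mu_mass_pos ab1 ab2 by auto
  have x: "weight_mass a b > 0" "weight_mass a' b' > 0" using weight_mass_pos ab1 ab2 by auto
  have y: "dual_mass a b > 0" "dual_mass a' b' > 0" using dual_mass_pos[OF p1] ab1 ab2 by auto
  have xx: "weight_mass a' b' \<le> weight_mass a b" using weight_mass_mono ab by auto
  have "dual_mass a b powr (p - 1) * mu_mass a' b' powr p \<le> dual_mass a b powr (p - 1) * (weight_mass a' b' * dual_mass a' b' powr (p - 1))"
    using mu_mass_powr_le[OF p1 ab2] by (intro mult_left_mono) auto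
  also have "\<dots> \<le> dual_mass a' b' powr (p - 1) * (weight_mass a b * dual_mass a b powr (p - 1))"
    using xx by (simp add: mult_left_mono mult_right_mono mult.left_commute mult.commute)
  also have "\<dots> \<le> dual_mass a' b' powr (p - 1) * (C * mu_mass a b powr p)"
    using Ap_condition_scaled[OF p1 ab1] by (intro mult_left_mono) auto
  finally have "dual_mass a b powr (p - 1) * mu_mass a' b' powr p \<le> dual_mass a' b' powr (p - 1) * (C * mu_mass a b powr p)" .
  then show ?thesis using m by (simp add: powr_divide field_simps)
qed

end

lemma local_Ap_weight_if_Ap_loc:
  assumes "w \<in> Ap_loc N p" and "N \<ge> 2" and "1 \<le> p"
  shows "\<exists>C. local_Ap_weight N p w C"
  using assms unfolding Ap_loc_def local_Ap_weight_def by blast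

section \<open>Gaussian integrability of local A_p weights\<close>

lemma neg_quadratic_le: fixes \<alpha> x \<beta> :: real assumes "\<alpha> > 0" shows "- \<alpha> * x\<^sup>2 + \<beta> * x \<le> \<beta>\<^sup>2 / (4 * \<alpha>)"
proof -
  have "0 \<le> \<alpha> * (x - \<beta> / (2 * \<alpha>))\<^sup>2" using assms by simp
  also have "\<alpha> * (x - \<beta> / (2 * \<alpha>))\<^sup>2 = \<alpha> * x\<^sup>2 - \<beta> * x + \<beta>\<^sup>2 / (4 * \<alpha>)"
    using assms by (simp add: power2_eq_square field_simps)
  finally show ?thesis by simp
qed

lemma gaussian_times_power_le: assumes c: "c > 0" and R: "R > 0"
  shows "exp (- c * (real k / 4)\<^sup>2) * R ^ k \<le> exp (4 * (ln R + 1)\<^sup>2 / c) * exp (-1) ^ k"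
proof -
  have e1: "R ^ k = exp (real k * ln R)" using R by (simp add: exp_of_nat_mult)
  have e2: "exp (-1) ^ k = exp (real k * (-1))" by (simp only: exp_of_nat_mult)
  have "- (c/16) * (real k)\<^sup>2 + (ln R + 1) * real k \<le> (ln R + 1)\<^sup>2 / (4 * (c/16))"
    using c by (intro neg_quadratic_le) auto
  also have "\<dots> = 4 * (ln R + 1)\<^sup>2 / c" using c by simp
  finally have "- c * (real k / 4)\<^sup>2 + real k * ln R \<le> 4 * (ln R + 1)\<^sup>2 / c + real k * (-1)"
    by (simp add: power2_eq_square algebra_simps)
  then have "exp (- c * (real k / 4)\<^sup>2 + real k * ln R) \<le> exp (4 * (ln R + 1)\<^sup>2 / c + real k * (-1))"
    by (rule exp_mono)
  then show ?thesis by (simp only: e1 e2 exp_add)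
qed

lemma quarter_intervals_cover: assumes "r > (0::real)" shows "\<exists>k::nat. r \<in> {real k / 4<..<real k / 4 + 1/2}"
proof -
  define m where "m = \<lceil>4 * r\<rceil>"
  have m1: "m \<ge> 1" using assms by (simp add: m_def)
  have c: "of_int m - 1 < 4 * r" "4 * r \<le> of_int m" using ceiling_correct[of "4 * r"] by (auto simp: m_def)
  have e: "real (nat (m - 1)) = of_int m - 1" using m1 by simp
  have "real (nat (m - 1)) / 4 < r" using c unfolding e by (simp add: field_simps)
  moreover have "r < real (nat (m - 1)) / 4 + 1/2" using c unfolding e by (simp add: field_simps)
  ultimately show ?thesis by auto
qed

lemma nn_integral_gaussian_finite:
  fixes v :: "real \<Rightarrow> real" and c R D :: real
  assumes vm: "(\<lambda>r. indicator {0<..} r * v r) \<in> borel_measurable lborel"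
    and vnn: "\<And>r. r > 0 \<Longrightarrow> 0 \<le> v r" and c: "c > 0" and R: "R > 0" and D: "D \<ge> 0"
    and bnd: "\<And>k::nat. (\<integral>\<^sup>+ r. ennreal (indicator {real k / 4<..<real k / 4 + 1/2} r * v r) \<partial>lborel) \<le> ennreal (D * R ^ k)"
  shows "(\<integral>\<^sup>+ r. ennreal (indicator {0<..} r * exp (- c * r\<^sup>2) * v r) \<partial>lborel) < \<infinity>"
proof -
  define I where "I k = {real k / 4<..<real k / 4 + 1/2}" for k :: nat
  define T where "T k r = ennreal (exp (- c * (real k / 4)\<^sup>2)) * ennreal (indicator (I k) r * v r)" for k :: nat and r
  have Im: "(\<lambda>r. indicator (I k) r * v r) \<in> borel_measurable lborel" for k
  proof -
    have "(\<lambda>r. indicator (I k) r * (indicator {0<..} r * v r)) \<in> borel_measurable lborel"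
      by (rule borel_measurable_times[OF _ vm]) (auto simp: I_def)
    moreover have "(\<lambda>r. indicator (I k) r * (indicator {0<..} r * v r)) = (\<lambda>r. indicator (I k) r * v r)"
      by (intro ext) (auto simp: I_def indicator_def)
    ultimately show ?thesis by simp
  qed
  have pt: "ennreal (indicator {0<..} r * exp (- c * r\<^sup>2) * v r) \<le> (\<Sum>k. T k r)" for r
  proof (cases "r > 0")
    case False then show ?thesis by simp
  next
    case True
    then obtain k where k: "r \<in> I k" using quarter_intervals_cover unfolding I_def by blast
    have k0: "real k / 4 \<le> r" using k by (auto simp: I_def)
    have "ennreal (indicator {0<..} r * exp (- c * r\<^sup>2) * v r) = ennreal (exp (- c * r\<^sup>2) * v r)"
      using True by simp
    also have "\<dots> \<le> ennreal (exp (- c * (real k / 4)\<^sup>2) * v r)"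
    proof (intro ennreal_leI mult_right_mono)
      have "(real k / 4)\<^sup>2 \<le> r\<^sup>2" using k0 by (intro power_mono) auto
      then show "exp (- c * r\<^sup>2) \<le> exp (- c * (real k / 4)\<^sup>2)" using c by simp
    qed (use vnn True in auto)
    also have "\<dots> = T k r" using k True vnn[of r] by (simp add: T_def ennreal_mult)
    also have "\<dots> \<le> (\<Sum>k. T k r)"
      using sum_le_suminf[OF summableI, of "{k}" "\<lambda>k. T k r"] by simp
    finally show ?thesis .
  qed
  have "(\<integral>\<^sup>+ r. ennreal (indicator {0<..} r * exp (- c * r\<^sup>2) * v r) \<partial>lborel) \<le> (\<integral>\<^sup>+ r. (\<Sum>k. T k r) \<partial>lborel)"
    by (intro nn_integral_mono pt)
  also have "\<dots> = (\<Sum>k. \<integral>\<^sup>+ r. T k r \<partial>lborel)"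
    using Im unfolding T_def by (intro nn_integral_suminf) auto
  also have "\<dots> = (\<Sum>k. ennreal (exp (- c * (real k / 4)\<^sup>2)) * \<integral>\<^sup>+ r. ennreal (indicator (I k) r * v r) \<partial>lborel)"
    using Im unfolding T_def by (subst nn_integral_cmult) auto
  also have "\<dots> \<le> (\<Sum>k. ennreal (exp (- c * (real k / 4)\<^sup>2)) * ennreal (D * R ^ k))"
    by (intro suminf_le summableI mult_left_mono) (auto simp: I_def bnd)
  also have "\<dots> \<le> (\<Sum>k. ennreal (D * exp (4 * (ln R + 1)\<^sup>2 / c) * exp (-1) ^ k))"
  proof (intro suminf_le summableI)
    fix k
    have "exp (- c * (real k / 4)\<^sup>2) * (D * R ^ k) = D * (exp (- c * (real k / 4)\<^sup>2) * R ^ k)" by simp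
    also have "\<dots> \<le> D * (exp (4 * (ln R + 1)\<^sup>2 / c) * exp (-1) ^ k)"
      by (intro mult_left_mono gaussian_times_power_le c R D)
    finally show "ennreal (exp (- c * (real k / 4)\<^sup>2)) * ennreal (D * R ^ k) \<le> ennreal (D * exp (4 * (ln R + 1)\<^sup>2 / c) * exp (-1) ^ k)"
      using D R by (simp add: ennreal_mult[symmetric] ennreal_leI mult.assoc)
  qed
  also have "\<dots> < \<infinity>"
  proof -
    have "summable (\<lambda>k. D * exp (4 * (ln R + 1)\<^sup>2 / c) * exp (-1) ^ k)"
      by (intro summable_mult summable_geometric) auto
    then show ?thesis using D by (simp add: ennreal_suminf_neq_top less_top)
  qed
  finally show ?thesis .
qed

context local_Ap_weight begin

lemma A1_condition_integrated:
  assumes p1: "p = 1" and ab: "0 \<le> a" "a \<le> a'" "a' < b'" "b' \<le> b" "b - a \<le> 1"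
  shows "(weight_mass a b / mu_mass a b) * mu_mass a' b' \<le> C * weight_mass a' b'"
proof -
  have ab1: "0 \<le> a" "a < b" "b - a \<le> 1" using ab by auto
  have ab2: "0 \<le> a'" "a' < b'" "b' - a' \<le> 1" using ab by auto
  have ae: "AE r in lborel. r \<in> {a'<..<b'} \<longrightarrow> (weight_mass a b / mu_mass a b) * r ^ (N - 1) \<le> C * (w r * r ^ (N - 1))"
    using A1_condition[OF p1 ab1]
  proof eventually_elim
    case (elim r)
    show ?case
    proof
      assume r: "r \<in> {a'<..<b'}"
      then have "(1 / mu_mass a b) * weight_mass a b \<le> C * w r" using elim ab by auto
      moreover have "0 \<le> r ^ (N - 1)" using r ab by auto
      ultimately show "(weight_mass a b / mu_mass a b) * r ^ (N - 1) \<le> C * (w r * r ^ (N - 1))"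
        using mult_right_mono by (fastforce simp: mult.assoc)
    qed
  qed
  have "(LINT r:{a'<..<b'}|lborel. (weight_mass a b / mu_mass a b) * r ^ (N - 1)) \<le> (LINT r:{a'<..<b'}|lborel. C * (w r * r ^ (N - 1)))"
    using ae set_integrable_weight[OF ab2] set_integrable_power_interval by (intro set_integral_mono_AE) auto
  then show ?thesis by (simp add: weight_mass_def mu_mass_def mu_meas_def)
qed

lemma A1_const_pos: assumes "p = 1" shows "C > 0"
proof -
  have "0 < (weight_mass 0 1 / mu_mass 0 1) * mu_mass 0 1" using weight_mass_pos[of 0 1] mu_mass_pos[of 0 1] by simp
  also have "\<dots> \<le> C * weight_mass 0 1" by (rule A1_condition_integrated[OF assms]) auto
  finally show ?thesis using weight_mass_pos[of 0 1] by (simp add: zero_less_mult_iff)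
qed

lemma mu_mass_ratio_le: "0 \<le> a \<Longrightarrow> mu_mass a (a + 3/4) / mu_mass a (a + 1/2) \<le> 3 ^ N"
  using mu_meas_enlarge_le[of a N] mu_mass_pos[of a "a + 1/2"] N by (simp add: mu_mass_def divide_le_eq)

lemma weight_mass_enlarge_le: "\<exists>R>0. \<forall>a\<ge>0. weight_mass a (a + 3/4) \<le> R * weight_mass a (a + 1/2)"
proof (cases "p = 1")
  case True
  show ?thesis
  proof (intro exI[of _ "C * 3 ^ N"] conjI allI impI)
    show "0 < C * 3 ^ N" using A1_const_pos[OF True] by simp
    fix a :: real assume a: "0 \<le> a"
    have m: "mu_mass a (a + 3/4) > 0" "mu_mass a (a + 1/2) > 0" using mu_mass_pos a by auto
    have "(weight_mass a (a + 3/4) / mu_mass a (a + 3/4)) * mu_mass a (a + 1/2) \<le> C * weight_mass a (a + 1/2)"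
      using a by (intro A1_condition_integrated[OF True]) auto
    then have "weight_mass a (a + 3/4) \<le> C * weight_mass a (a + 1/2) * (mu_mass a (a + 3/4) / mu_mass a (a + 1/2))"
      using m by (simp add: field_simps)
    also have "\<dots> \<le> C * weight_mass a (a + 1/2) * 3 ^ N"
      using mu_mass_ratio_le[OF a] A1_const_pos[OF True] weight_mass_pos[of a "a + 1/2"] a by (intro mult_left_mono) auto
    finally show "weight_mass a (a + 3/4) \<le> C * 3 ^ N * weight_mass a (a + 1/2)" by (simp add: mult_ac)
  qed
next
  case False
  show ?thesis
  proof (intro exI[of _ "C * (3 ^ N) powr p"] conjI allI impI)
    show "0 < C * (3 ^ N) powr p" using Ap_const_pos[OF False] by simp
    fix a :: real assume a: "0 \<le> a"
    have m: "mu_mass a (a + 3/4) > 0" "mu_mass a (a + 1/2) > 0" using mu_mass_pos a by auto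
    have "weight_mass a (a + 3/4) \<le> C * (mu_mass a (a + 3/4) / mu_mass a (a + 1/2)) powr p * weight_mass a (a + 1/2)"
      using a by (intro weight_mass_le_subinterval[OF False]) auto
    also have "\<dots> \<le> C * (3 ^ N) powr p * weight_mass a (a + 1/2)"
      using mu_mass_ratio_le[OF a] Ap_const_pos[OF False] weight_mass_pos[of a "a + 1/2"] a m p
      by (intro mult_right_mono mult_left_mono powr_mono2) auto
    finally show "weight_mass a (a + 3/4) \<le> C * (3 ^ N) powr p * weight_mass a (a + 1/2)" .
  qed
qed

lemma dual_mass_enlarge_le: assumes p1: "p \<noteq> 1" shows "\<exists>R>0. \<forall>a\<ge>0. dual_mass a (a + 3/4) \<le> R * dual_mass a (a + 1/2)"
proof (intro exI[of _ "(C * (3 ^ N) powr p) powr (1 / (p - 1))"] conjI allI impI)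
  have pp: "p > 1" using p p1 by simp
  show "0 < (C * (3 ^ N) powr p) powr (1 / (p - 1))" using Ap_const_pos[OF p1] by simp
  fix a :: real assume a: "0 \<le> a"
  have m: "mu_mass a (a + 3/4) > 0" "mu_mass a (a + 1/2) > 0" using mu_mass_pos a by auto
  have y: "dual_mass a (a + 3/4) > 0" "dual_mass a (a + 1/2) > 0" using dual_mass_pos[OF p1] a by auto
  have "dual_mass a (a + 3/4) powr (p - 1) \<le> C * (mu_mass a (a + 3/4) / mu_mass a (a + 1/2)) powr p * dual_mass a (a + 1/2) powr (p - 1)"
    using a by (intro dual_mass_le_subinterval[OF p1]) auto
  also have "\<dots> \<le> C * (3 ^ N) powr p * dual_mass a (a + 1/2) powr (p - 1)"
    using mu_mass_ratio_le[OF a] Ap_const_pos[OF p1] a m p y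
    by (intro mult_right_mono mult_left_mono powr_mono2) auto
  finally have le: "dual_mass a (a + 3/4) powr (p - 1) \<le> C * (3 ^ N) powr p * dual_mass a (a + 1/2) powr (p - 1)" .
  have "dual_mass a (a + 3/4) = (dual_mass a (a + 3/4) powr (p - 1)) powr (1 / (p - 1))"
    using y pp by (simp add: powr_powr)
  also have "\<dots> \<le> (C * (3 ^ N) powr p * dual_mass a (a + 1/2) powr (p - 1)) powr (1 / (p - 1))"
    using le y pp by (intro powr_mono2) auto
  also have "\<dots> = (C * (3 ^ N) powr p) powr (1 / (p - 1)) * dual_mass a (a + 1/2)"
    using y pp Ap_const_pos[OF p1] by (simp add: powr_mult powr_powr)
  finally show "dual_mass a (a + 3/4) \<le> (C * (3 ^ N) powr p) powr (1 / (p - 1)) * dual_mass a (a + 1/2)" .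
qed

lemma weight_mass_geometric_growth: "\<exists>R>0. \<forall>k::nat. weight_mass (real k / 4) (real k / 4 + 1/2) \<le> weight_mass 0 (1/2) * R ^ k"
proof -
  obtain R where R: "R > 0" "\<And>a. a \<ge> 0 \<Longrightarrow> weight_mass a (a + 3/4) \<le> R * weight_mass a (a + 1/2)"
    using weight_mass_enlarge_le by auto
  have "weight_mass (real k / 4) (real k / 4 + 1/2) \<le> weight_mass 0 (1/2) * R ^ k" for k
  proof (induction k)
    case 0 then show ?case by simp
  next
    case (Suc k)
    have "weight_mass (real (Suc k) / 4) (real (Suc k) / 4 + 1/2) = weight_mass (real k / 4 + 1/4) (real k / 4 + 3/4)"
      by (rule arg_cong2[where f=weight_mass]) (simp_all add: field_simps)
    also have "\<dots> \<le> weight_mass (real k / 4) (real k / 4 + 3/4)" by (intro weight_mass_mono) auto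
    also have "\<dots> \<le> R * weight_mass (real k / 4) (real k / 4 + 1/2)" by (intro R) auto
    also have "\<dots> \<le> R * (weight_mass 0 (1/2) * R ^ k)" using Suc R by (intro mult_left_mono) auto
    finally show ?case by (simp add: mult_ac)
  qed
  then show ?thesis using R by auto
qed

lemma dual_mass_geometric_growth: assumes p1: "p \<noteq> 1" shows "\<exists>R>0. \<forall>k::nat. dual_mass (real k / 4) (real k / 4 + 1/2) \<le> dual_mass 0 (1/2) * R ^ k"
proof -
  obtain R where R: "R > 0" "\<And>a. a \<ge> 0 \<Longrightarrow> dual_mass a (a + 3/4) \<le> R * dual_mass a (a + 1/2)"
    using dual_mass_enlarge_le[OF p1] by auto
  have "dual_mass (real k / 4) (real k / 4 + 1/2) \<le> dual_mass 0 (1/2) * R ^ k" for k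
  proof (induction k)
    case 0 then show ?case by simp
  next
    case (Suc k)
    have "dual_mass (real (Suc k) / 4) (real (Suc k) / 4 + 1/2) = dual_mass (real k / 4 + 1/4) (real k / 4 + 3/4)"
      by (rule arg_cong2[where f=dual_mass]) (simp_all add: field_simps)
    also have "\<dots> \<le> dual_mass (real k / 4) (real k / 4 + 3/4)" by (intro dual_mass_mono[OF p1]) auto
    also have "\<dots> \<le> R * dual_mass (real k / 4) (real k / 4 + 1/2)" by (intro R) auto
    also have "\<dots> \<le> R * (dual_mass 0 (1/2) * R ^ k)" using Suc R by (intro mult_left_mono) auto
    finally show ?case by (simp add: mult_ac)
  qed
  then show ?thesis using R by auto
qed

lemma gaussian_weight_integrable: assumes c: "c > 0"
  shows "(\<integral>\<^sup>+ r. ennreal (indicator {0<..} r * exp (- c * r\<^sup>2) * (w r * r ^ (N - 1))) \<partial>lborel) < \<infinity>"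
proof -
  obtain R where R: "R > 0" "\<And>k::nat. weight_mass (real k / 4) (real k / 4 + 1/2) \<le> weight_mass 0 (1/2) * R ^ k"
    using weight_mass_geometric_growth by auto
  show ?thesis
  proof (rule nn_integral_gaussian_finite[OF _ _ c R(1)])
    show "(\<lambda>r. indicator {0<..} r * (w r * r ^ (N - 1))) \<in> borel_measurable lborel"
      using wmeas by (simp add: mult.assoc[symmetric])
    show "0 \<le> weight_mass 0 (1/2)" using weight_mass_pos[of 0 "1/2"] by simp
    fix k :: nat
    show "(\<integral>\<^sup>+ r. ennreal (indicator {real k / 4<..<real k / 4 + 1/2} r * (w r * r ^ (N - 1))) \<partial>lborel)
        \<le> ennreal (weight_mass 0 (1/2) * R ^ k)"
      using R(2)[of k] by (subst nn_integral_weight_interval) (auto intro: ennreal_leI)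
  qed (use wpos in \<open>auto intro!: mult_nonneg_nonneg simp: less_imp_le\<close>)
qed

lemma gaussian_dual_weight_integrable: assumes p1: "p \<noteq> 1" and c: "c > 0"
  shows "(\<integral>\<^sup>+ r. ennreal (indicator {0<..} r * exp (- c * r\<^sup>2) * (w r powr (- 1 / (p - 1)) * r ^ (N - 1))) \<partial>lborel) < \<infinity>"
proof -
  obtain R where R: "R > 0" "\<And>k::nat. dual_mass (real k / 4) (real k / 4 + 1/2) \<le> dual_mass 0 (1/2) * R ^ k"
    using dual_mass_geometric_growth[OF p1] by auto
  show ?thesis
  proof (rule nn_integral_gaussian_finite[OF _ _ c R(1)])
    have "(\<lambda>r. (indicator {0<..} r * w r) powr (- 1 / (p - 1)) * r ^ (N - 1)) \<in> borel_measurable lborel"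
      using wmeas by measurable
    moreover have "(\<lambda>r. (indicator {0<..} r * w r) powr (- 1 / (p - 1)) * r ^ (N - 1)) =
       (\<lambda>r. indicator {0<..} r * (w r powr (- 1 / (p - 1)) * r ^ (N - 1)))"
      by (intro ext) (auto simp: indicator_def)
    ultimately show "(\<lambda>r. indicator {0<..} r * (w r powr (- 1 / (p - 1)) * r ^ (N - 1))) \<in> borel_measurable lborel"
      by simp
    show "0 \<le> dual_mass 0 (1/2)" using dual_mass_pos[OF p1, of 0 "1/2"] by simp
    fix k :: nat
    show "(\<integral>\<^sup>+ r. ennreal (indicator {real k / 4<..<real k / 4 + 1/2} r * (w r powr (- 1 / (p - 1)) * r ^ (N - 1))) \<partial>lborel)
        \<le> ennreal (dual_mass 0 (1/2) * R ^ k)"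
      using R(2)[of k] p1 by (subst nn_integral_dual_weight_interval) (auto intro: ennreal_leI)
  qed (auto intro!: mult_nonneg_nonneg)
qed

(* By the A_1 condition these averages decrease at most geometrically, and each is at most C w
   almost everywhere on its interval. *)
definition quarter_average :: "nat \<Rightarrow> real" where
  "quarter_average k = weight_mass (real k / 4) (real k / 4 + 3/4) / mu_mass (real k / 4) (real k / 4 + 3/4)"

lemma quarter_average_pos: "quarter_average k > 0"
  unfolding quarter_average_def
  using weight_mass_pos[of "real k / 4" "real k / 4 + 3/4"] mu_mass_pos[of "real k / 4" "real k / 4 + 3/4"] by simp

lemma quarter_average_le_Suc:
  assumes p1: "p = 1"
  shows "quarter_average k \<le> C * 3 ^ N * quarter_average (Suc k)"
proof -
  define a where "a = real k / 4"
  have a: "a \<ge> 0" by (simp add: a_def)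
  have sk: "real (Suc k) / 4 = a + 1/4" by (simp add: a_def field_simps)
  have mI: "mu_mass (a + 1/4) (a + 3/4) > 0" using mu_mass_pos a by auto
  have "quarter_average k * mu_mass (a + 1/4) (a + 3/4) \<le> C * weight_mass (a + 1/4) (a + 3/4)"
    unfolding quarter_average_def a_def[symmetric] using a by (intro A1_condition_integrated[OF p1]) auto
  also have "weight_mass (a + 1/4) (a + 3/4) \<le> weight_mass (a + 1/4) (a + 1/4 + 3/4)"
    using a by (intro weight_mass_mono) auto
  also have "weight_mass (a + 1/4) (a + 1/4 + 3/4) = quarter_average (Suc k) * mu_mass (a + 1/4) (a + 1/4 + 3/4)"
    unfolding quarter_average_def sk using mu_mass_pos[of "a + 1/4" "a + 1/4 + 3/4"] a by simp
  also have "mu_mass (a + 1/4) (a + 1/4 + 3/4) \<le> 3 ^ N * mu_mass (a + 1/4) (a + 3/4)"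
    using mu_meas_enlarge_le[of "a + 1/4" N] a N by (simp add: mu_mass_def add.assoc)
  finally have "quarter_average k * mu_mass (a + 1/4) (a + 3/4)
      \<le> C * (quarter_average (Suc k) * (3 ^ N * mu_mass (a + 1/4) (a + 3/4)))"
    using A1_const_pos[OF p1] quarter_average_pos[of "Suc k"] by (simp add: mult_left_mono)
  then show ?thesis using mI by (simp add: mult_ac)
qed

lemma quarter_average_geometric_lower_bound:
  assumes p1: "p = 1"
  shows "quarter_average 0 * (1 / (C * 3 ^ N)) ^ k \<le> quarter_average k"
proof (induction k)
  case (Suc k)
  have "quarter_average 0 * (1 / (C * 3 ^ N)) ^ Suc k \<le> quarter_average k * (1 / (C * 3 ^ N))"
    using Suc A1_const_pos[OF p1] by (simp add: divide_right_mono)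
  also have "\<dots> \<le> quarter_average (Suc k)"
    using quarter_average_le_Suc[OF p1, of k] A1_const_pos[OF p1] by (simp add: field_simps)
  finally show ?case .
qed simp

lemma gaussian_le_A1_weight: assumes p1: "p = 1" and c: "c > 0"
  shows "\<exists>K. AE r in lborel. r > 0 \<longrightarrow> exp (- c * r\<^sup>2) \<le> K * w r"
proof -
  define lam where "lam = quarter_average"
  define \<rho> where "\<rho> = 1 / (C * 3 ^ N)"
  have Cp: "C > 0" using A1_const_pos[OF p1] .
  have \<rho>: "\<rho> > 0" using Cp by (simp add: \<rho>_def)
  have lam_pos: "lam k > 0" for k using quarter_average_pos by (simp add: lam_def)
  have lam_low: "lam 0 * \<rho> ^ k \<le> lam k" for k
    using quarter_average_geometric_lower_bound[OF p1] by (simp add: lam_def \<rho>_def)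
  have ae: "AE r in lborel. \<forall>k. r \<in> {real k / 4<..<real k / 4 + 3/4} \<longrightarrow> lam k \<le> C * w r"
  proof (subst AE_all_countable, intro allI)
    fix k :: nat
    have "AE r in lborel. r \<in> {real k / 4<..<real k / 4 + 3/4} \<longrightarrow>
       (1 / mu_mass (real k / 4) (real k / 4 + 3/4)) * weight_mass (real k / 4) (real k / 4 + 3/4) \<le> C * w r"
      by (intro A1_condition[OF p1]) auto
    then show "AE r in lborel. r \<in> {real k / 4<..<real k / 4 + 3/4} \<longrightarrow> lam k \<le> C * w r"
      by eventually_elim (simp add: lam_def quarter_average_def)
  qed
  define K0 where "K0 = exp (4 * (ln (1/\<rho>) + 1)\<^sup>2 / c)"
  show ?thesis
  proof (intro exI[of _ "K0 * C / lam 0"])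
    show "AE r in lborel. r > 0 \<longrightarrow> exp (- c * r\<^sup>2) \<le> K0 * C / lam 0 * w r"
      using ae
    proof eventually_elim
      case (elim r)
      show ?case
      proof
        assume r: "r > 0"
        then obtain k :: nat where k: "r \<in> {real k / 4<..<real k / 4 + 1/2}" using quarter_intervals_cover by blast
        have wk: "lam k \<le> C * w r" using elim k by auto
        have "exp (- c * r\<^sup>2) \<le> exp (- c * (real k / 4)\<^sup>2)"
        proof -
          have "(real k / 4)\<^sup>2 \<le> r\<^sup>2" using k by (intro power_mono) auto
          then show ?thesis using c by simp
        qed
        also have "exp (- c * (real k / 4)\<^sup>2) \<le> K0 * \<rho> ^ k"
        proof -
          have "exp (- c * (real k / 4)\<^sup>2) * (1/\<rho>) ^ k \<le> K0 * exp (-1) ^ k"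
            unfolding K0_def using c \<rho> by (intro gaussian_times_power_le) auto
          also have "\<dots> \<le> K0 * 1" unfolding K0_def by (intro mult_left_mono) (auto simp: power_le_one)
          finally have "exp (- c * (real k / 4)\<^sup>2) * (1/\<rho>) ^ k \<le> K0" by simp
          then show ?thesis using \<rho> by (simp add: power_one_over field_simps)
        qed
        also have "K0 * \<rho> ^ k = (K0 / lam 0) * (lam 0 * \<rho> ^ k)" using lam_pos[of 0] by simp
        also have "\<dots> \<le> (K0 / lam 0) * (C * w r)"
          using lam_low[of k] wk lam_pos[of 0] by (intro mult_left_mono) (auto simp: K0_def)
        finally show "exp (- c * r\<^sup>2) \<le> K0 * C / lam 0 * w r" by simp
      qed
    qed
  qed
qed

end

section \<open>Domination of the Hermite semigroup by a rank-one operator\<close>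

lemma cosh_gt_1: assumes "(x::real) > 0" shows "cosh x > 1"
proof -
  have s: "sinh (x/2) > 0" using assms by simp
  have "cosh x = 1 + 2 * (sinh (x/2))\<^sup>2"
    by (simp add: cosh_def sinh_def power2_eq_square field_simps exp_minus mult_exp_exp[symmetric] flip: exp_add)
  then show ?thesis using s by simp
qed

lemma inner_le_half_norms: "(x::real^'n) \<bullet> y \<le> ((norm x)\<^sup>2 + (norm y)\<^sup>2) / 2"
proof -
  have "x \<bullet> y \<le> norm x * norm y" by (rule norm_cauchy_schwarz)
  also have "\<dots> \<le> ((norm x)\<^sup>2 + (norm y)\<^sup>2) / 2"
    using sum_squares_ge_zero[of "norm x - norm y" 0] by (simp add: power2_eq_square algebra_simps)
  finally show ?thesis .
qed

(* After x \<bullet> y \<le> (|x|^2 + |y|^2)/2 the exponent of K_t is at most -(coth 2t - csch 2t)(|x|^2 + |y|^2)/2,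
   which gives the Gaussian rate kernel_decay. *)
definition kernel_const :: "real \<Rightarrow> nat \<Rightarrow> real" where
  "kernel_const t n = pi powr (- real n / 2) * sinh (2 * t) powr (- real n / 2)"
definition kernel_decay :: "real \<Rightarrow> real" where
  "kernel_decay t = (cosh (2 * t) - 1) / (2 * sinh (2 * t))"

lemma kernel_decay_pos: "t > 0 \<Longrightarrow> kernel_decay t > 0"
  unfolding kernel_decay_def using cosh_gt_1[of "2 * t"] by simp

lemma kernel_const_pos: "t > 0 \<Longrightarrow> kernel_const t n > 0"
  unfolding kernel_const_def by simp

lemma kernel_bound:
  assumes t: "t > 0"
  shows "0 < hermite_kernel t x (y::real^'n)"
    "hermite_kernel t x y \<le> kernel_const t CARD('n) * exp (- kernel_decay t * (norm x)\<^sup>2) * exp (- kernel_decay t * (norm y)\<^sup>2)"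
proof -
  show "0 < hermite_kernel t x (y::real^'n)" unfolding hermite_kernel_def using t by simp
  have s: "sinh (2 * t) > 0" using t by simp
  have "- (1/2) * (cosh (2 * t) / sinh (2 * t)) * ((norm x)\<^sup>2 + (norm y)\<^sup>2) + (1 / sinh (2 * t)) * (x \<bullet> y)
     \<le> - (1/2) * (cosh (2 * t) / sinh (2 * t)) * ((norm x)\<^sup>2 + (norm y)\<^sup>2) + (1 / sinh (2 * t)) * (((norm x)\<^sup>2 + (norm y)\<^sup>2) / 2)"
    using s inner_le_half_norms[of x y] by (intro add_left_mono mult_left_mono) auto
  also have "\<dots> = - kernel_decay t * (norm x)\<^sup>2 + - kernel_decay t * (norm y)\<^sup>2"
    using s by (simp add: kernel_decay_def field_simps)
  finally have "exp (- (1/2) * (cosh (2 * t) / sinh (2 * t)) * ((norm x)\<^sup>2 + (norm y)\<^sup>2) + (1 / sinh (2 * t)) * (x \<bullet> y))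
      \<le> exp (- kernel_decay t * (norm x)\<^sup>2) * exp (- kernel_decay t * (norm y)\<^sup>2)"
    by (simp add: exp_add[symmetric])
  then show "hermite_kernel t x y \<le> kernel_const t CARD('n) * exp (- kernel_decay t * (norm x)\<^sup>2) * exp (- kernel_decay t * (norm y)\<^sup>2)"
    unfolding hermite_kernel_def kernel_const_def using s by (simp add: mult.assoc mult_left_mono)
qed

lemma norm_hermite_semigroup_le:
  fixes f :: "real^'n \<Rightarrow> complex"
  assumes t: "t > 0" and fm: "f \<in> borel_measurable lborel"
  shows "ennreal (cmod (hermite_semigroup t f x)) \<le>
    ennreal (kernel_const t CARD('n) * exp (- kernel_decay t * (norm x)\<^sup>2)) * (\<integral>\<^sup>+ y. ennreal (exp (- kernel_decay t * (norm y)\<^sup>2) * cmod (f y)) \<partial>lborel)"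
proof (cases "integrable lborel (\<lambda>y. complex_of_real (hermite_kernel t x y) * f y)")
  case False
  then show ?thesis by (simp add: hermite_semigroup_def not_integrable_integral_eq)
next
  case True
  have "ennreal (cmod (hermite_semigroup t f x)) \<le> (\<integral>\<^sup>+ y. ennreal (norm (complex_of_real (hermite_kernel t x y) * f y)) \<partial>lborel)"
    unfolding hermite_semigroup_def by (rule integral_norm_bound_ennreal[OF True])
  also have "\<dots> \<le> (\<integral>\<^sup>+ y. ennreal (kernel_const t CARD('n) * exp (- kernel_decay t * (norm x)\<^sup>2)) * ennreal (exp (- kernel_decay t * (norm y)\<^sup>2) * cmod (f y)) \<partial>lborel)"
  proof (intro nn_integral_mono)
    fix y
    have "norm (complex_of_real (hermite_kernel t x y) * f y) = hermite_kernel t x y * cmod (f y)"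
      using kernel_bound(1)[OF t, of x y] by (simp add: norm_mult)
    also have "\<dots> \<le> kernel_const t CARD('n) * exp (- kernel_decay t * (norm x)\<^sup>2) * exp (- kernel_decay t * (norm y)\<^sup>2) * cmod (f y)"
      using kernel_bound(2)[OF t, of x y] by (intro mult_right_mono) auto
    finally have le: "norm (complex_of_real (hermite_kernel t x y) * f y) \<le> kernel_const t CARD('n) * exp (- kernel_decay t * (norm x)\<^sup>2) * exp (- kernel_decay t * (norm y)\<^sup>2) * cmod (f y)" .
    show "ennreal (norm (complex_of_real (hermite_kernel t x y) * f y)) \<le>
        ennreal (kernel_const t CARD('n) * exp (- kernel_decay t * (norm x)\<^sup>2)) * ennreal (exp (- kernel_decay t * (norm y)\<^sup>2) * cmod (f y))"
    proof -
      have "ennreal (kernel_const t CARD('n) * exp (- kernel_decay t * (norm x)\<^sup>2)) * ennreal (exp (- kernel_decay t * (norm y)\<^sup>2) * cmod (f y))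
         = ennreal (kernel_const t CARD('n) * exp (- kernel_decay t * (norm x)\<^sup>2) * (exp (- kernel_decay t * (norm y)\<^sup>2) * cmod (f y)))"
        using kernel_const_pos[OF t, of "CARD('n)"] by (intro ennreal_mult[symmetric]) auto
      moreover note le
      ultimately show ?thesis by (simp add: ennreal_leI mult.assoc)
    qed
  qed
  also have "\<dots> = ennreal (kernel_const t CARD('n) * exp (- kernel_decay t * (norm x)\<^sup>2)) * (\<integral>\<^sup>+ y. ennreal (exp (- kernel_decay t * (norm y)\<^sup>2) * cmod (f y)) \<partial>lborel)"
  proof -
    have fm': "f \<in> borel_measurable borel" using fm by simp
    show ?thesis using fm' by (intro nn_integral_cmult) measurable
  qed
  finally show ?thesis .
qed

lemma le_ennpow_half_mult:
  fixes X Y Z :: ennreal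
  assumes "X ^ 2 \<le> Y * Z"
  shows "X \<le> ennpow Y (1/2) * ennpow Z (1/2)"
proof (cases "Y = top \<or> Z = top")
  case True
  show ?thesis
  proof (cases "Y = 0 \<or> Z = 0")
    case True
    then have "X ^ 2 = 0" using assms by auto
    then show ?thesis by simp
  next
    case False
    then have "ennpow Y (1/2) \<noteq> 0" "ennpow Z (1/2) \<noteq> 0" by (auto simp: ennpow_eq_0_iff)
    moreover have "ennpow Y (1/2) = top \<or> ennpow Z (1/2) = top" using True by auto
    ultimately show ?thesis by (auto simp: ennreal_mult_top ennreal_top_mult top_unique)
  qed
next
  case False
  then obtain y z where yz: "Y = ennreal y" "Z = ennreal z" "y \<ge> 0" "z \<ge> 0" by (cases Y; cases Z) auto
  have "X ^ 2 \<noteq> top" using assms yz by (auto simp: top_unique ennreal_mult[symmetric])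
  then have "X \<noteq> top" by auto
  then obtain x where x: "X = ennreal x" "x \<ge> 0" by (cases X) auto
  have "ennreal (x ^ 2) \<le> ennreal (y * z)" using assms x yz by (simp add: ennreal_power ennreal_mult[symmetric])
  then have "x ^ 2 \<le> y * z" using yz by (simp add: ennreal_le_iff)
  then have "x \<le> sqrt (y * z)" by (rule real_le_rsqrt)
  then have "x \<le> y powr (1/2) * z powr (1/2)" using yz by (simp add: powr_half_sqrt real_sqrt_mult)
  then show ?thesis using x yz by (simp add: ennpow_ennreal ennreal_mult[symmetric] ennreal_leI)
qed

lemma measurable_scaleR_sphere: "(\<lambda>\<eta>::real^'n. r *\<^sub>R \<eta>) \<in> (sphere_measure :: (real^'n) measure) \<rightarrow>\<^sub>M borel"
proof -
  have "(\<lambda>\<eta>::real^'n. r *\<^sub>R \<eta>) \<in> restrict_space borel (sphere 0 1) \<rightarrow>\<^sub>M borel"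
    by (intro measurable_restrict_space1) simp
  then show ?thesis by (simp cong: measurable_cong_sets add: sets_sphere_measure)
qed

definition sphere_L2 :: "(real^'n \<Rightarrow> complex) \<Rightarrow> real \<Rightarrow> ennreal" where
  "sphere_L2 f r = (\<integral>\<^sup>+ \<omega>. ennreal ((cmod (f (r *\<^sub>R \<omega>)))\<^sup>2) \<partial>(sphere_measure :: (real^'n) measure))"

lemma nn_integral_sphere_le_sphere_L2:
  fixes f :: "real^'n \<Rightarrow> complex"
  assumes fm: "f \<in> borel_measurable lborel"
  shows "(\<integral>\<^sup>+ \<eta>. ennreal (cmod (f (r *\<^sub>R \<eta>))) \<partial>(sphere_measure :: (real^'n) measure))
     \<le> ennpow (sphere_L2 f r) (1/2) * ennpow (emeasure (sphere_measure :: (real^'n) measure) (sphere 0 1)) (1/2)"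
proof (rule le_ennpow_half_mult)
  have fm': "f \<in> borel_measurable borel" using fm by simp
  have m: "(\<lambda>\<eta>. ennreal (cmod (f (r *\<^sub>R \<eta>)))) \<in> borel_measurable (sphere_measure :: (real^'n) measure)"
    using measurable_compose[OF measurable_scaleR_sphere[of r] fm'] by measurable
  have "(\<integral>\<^sup>+ \<eta>. ennreal (cmod (f (r *\<^sub>R \<eta>))) * 1 \<partial>(sphere_measure :: (real^'n) measure))\<^sup>2 \<le>
      (\<integral>\<^sup>+ \<eta>. ennreal (cmod (f (r *\<^sub>R \<eta>))) ^ 2 \<partial>(sphere_measure :: (real^'n) measure)) *
      (\<integral>\<^sup>+ \<eta>. 1 ^ 2 \<partial>(sphere_measure :: (real^'n) measure))"
    by (rule Cauchy_Schwarz_nn_integral) (use m in auto)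
  then show "(\<integral>\<^sup>+ \<eta>. ennreal (cmod (f (r *\<^sub>R \<eta>))) \<partial>(sphere_measure :: (real^'n) measure))\<^sup>2 \<le>
      sphere_L2 f r * emeasure (sphere_measure :: (real^'n) measure) (sphere 0 1)"
    by (simp add: sphere_L2_def ennreal_power space_sphere_measure)
qed

lemma borel_measurable_sphere_L2:
  fixes f :: "real^'n \<Rightarrow> complex"
  assumes fm: "f \<in> borel_measurable lborel"
  shows "sphere_L2 f \<in> borel_measurable (borel :: real measure)"
proof -
  interpret S: finite_measure "sphere_measure :: (real^'n) measure" by (rule finite_measure_sphere_measure)
  have fm': "f \<in> borel_measurable borel" using fm by simp
  have "(\<lambda>x. ennreal ((cmod (f ((\<lambda>(r, \<eta>). r *\<^sub>R \<eta>) x)))\<^sup>2)) \<in> borel_measurable (borel \<Otimes>\<^sub>M restrict_space borel (sphere (0::real^'n) 1))"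
    using measurable_compose[OF measurable_polar_coords_inverse fm'] by measurable
  then have "(\<lambda>(r, \<eta>). ennreal ((cmod (f (r *\<^sub>R \<eta>)))\<^sup>2)) \<in> borel_measurable (borel \<Otimes>\<^sub>M (sphere_measure :: (real^'n) measure))"
    using sets_pair_measure_cong[OF refl sets_sphere_measure[where 'n='n], of "borel :: real measure"]
    by (simp cong: measurable_cong_sets add: case_prod_beta')
  from S.borel_measurable_nn_integral_fst[OF this] show ?thesis
    unfolding sphere_L2_def by simp
qed

lemma borel_measurable_sphere_L2_times:
  fixes f :: "real^'n \<Rightarrow> complex"
  assumes fm: "f \<in> borel_measurable lborel" and hm: "h \<in> borel_measurable borel"
  shows "(\<lambda>r. ennreal (h r) * ennpow (sphere_L2 f r) a) \<in> borel_measurable lborel"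
  using borel_measurable_sphere_L2[OF fm] hm unfolding ennpow_def by measurable

lemma nn_integral_gaussian_le_radial:
  fixes f :: "real^'n \<Rightarrow> complex" and \<gamma> :: real
  assumes n: "CARD('n) \<ge> 2" and fm: "f \<in> borel_measurable lborel"
  shows "(\<integral>\<^sup>+ y. ennreal (exp (- \<gamma> * (norm y)\<^sup>2) * cmod (f y)) \<partial>lborel) \<le>
    ennpow (emeasure (sphere_measure :: (real^'n) measure) (sphere 0 1)) (1/2) * (\<integral>\<^sup>+ r. ennreal (indicator {0<..} r * r ^ (CARD('n) - 1) * exp (- \<gamma> * r\<^sup>2)) * ennpow (sphere_L2 f r) (1/2) \<partial>lborel)"
proof -
  have fm': "f \<in> borel_measurable borel" using fm by simp
  have gm: "(\<lambda>y. ennreal (exp (- \<gamma> * (norm y)\<^sup>2) * cmod (f y))) \<in> borel_measurable (borel :: (real^'n) measure)"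
    using fm' by measurable
  have "(\<integral>\<^sup>+ y. ennreal (exp (- \<gamma> * (norm y)\<^sup>2) * cmod (f y)) \<partial>lborel) =
     (\<integral>\<^sup>+ r. ennreal (indicator {0<..} r * r ^ (CARD('n) - 1)) *
        (\<integral>\<^sup>+ \<eta>. ennreal (exp (- \<gamma> * (norm (r *\<^sub>R \<eta>))\<^sup>2) * cmod (f (r *\<^sub>R \<eta>))) \<partial>(sphere_measure :: (real^'n) measure)) \<partial>lborel)"
    by (rule nn_integral_polar_coords[OF n gm])
  also have "\<dots> \<le> (\<integral>\<^sup>+ r. ennpow (emeasure (sphere_measure :: (real^'n) measure) (sphere 0 1)) (1/2) * (ennreal (indicator {0<..} r * r ^ (CARD('n) - 1) * exp (- \<gamma> * r\<^sup>2)) * ennpow (sphere_L2 f r) (1/2)) \<partial>lborel)"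
  proof (intro nn_integral_mono)
    fix r :: real
    show "ennreal (indicator {0<..} r * r ^ (CARD('n) - 1)) *
        (\<integral>\<^sup>+ \<eta>. ennreal (exp (- \<gamma> * (norm (r *\<^sub>R \<eta>))\<^sup>2) * cmod (f (r *\<^sub>R \<eta>))) \<partial>(sphere_measure :: (real^'n) measure))
      \<le> ennpow (emeasure (sphere_measure :: (real^'n) measure) (sphere 0 1)) (1/2) * (ennreal (indicator {0<..} r * r ^ (CARD('n) - 1) * exp (- \<gamma> * r\<^sup>2)) * ennpow (sphere_L2 f r) (1/2))"
    proof (cases "r > 0")
      case False then show ?thesis by simp
    next
      case True
      have m: "(\<lambda>\<eta>. ennreal (cmod (f (r *\<^sub>R \<eta>)))) \<in> borel_measurable (sphere_measure :: (real^'n) measure)"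
        using measurable_compose[OF measurable_scaleR_sphere[of r] fm'] by measurable
      have "(\<integral>\<^sup>+ \<eta>. ennreal (exp (- \<gamma> * (norm (r *\<^sub>R \<eta>))\<^sup>2) * cmod (f (r *\<^sub>R \<eta>))) \<partial>(sphere_measure :: (real^'n) measure))
          = (\<integral>\<^sup>+ \<eta>. ennreal (exp (- \<gamma> * r\<^sup>2)) * ennreal (cmod (f (r *\<^sub>R \<eta>))) \<partial>(sphere_measure :: (real^'n) measure))"
        using True by (intro nn_integral_cong) (simp add: space_sphere_measure ennreal_mult)
      also have "\<dots> = ennreal (exp (- \<gamma> * r\<^sup>2)) * (\<integral>\<^sup>+ \<eta>. ennreal (cmod (f (r *\<^sub>R \<eta>))) \<partial>(sphere_measure :: (real^'n) measure))"
        using m by (rule nn_integral_cmult)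
      also have "\<dots> \<le> ennreal (exp (- \<gamma> * r\<^sup>2)) * (ennpow (sphere_L2 f r) (1/2) * ennpow (emeasure (sphere_measure :: (real^'n) measure) (sphere 0 1)) (1/2))"
        by (intro mult_left_mono nn_integral_sphere_le_sphere_L2[OF fm]) auto
      finally have le: "(\<integral>\<^sup>+ \<eta>. ennreal (exp (- \<gamma> * (norm (r *\<^sub>R \<eta>))\<^sup>2) * cmod (f (r *\<^sub>R \<eta>))) \<partial>(sphere_measure :: (real^'n) measure))
          \<le> ennreal (exp (- \<gamma> * r\<^sup>2)) * (ennpow (sphere_L2 f r) (1/2) * ennpow (emeasure (sphere_measure :: (real^'n) measure) (sphere 0 1)) (1/2))" .
      have "ennreal (indicator {0<..} r * r ^ (CARD('n) - 1)) *
          (\<integral>\<^sup>+ \<eta>. ennreal (exp (- \<gamma> * (norm (r *\<^sub>R \<eta>))\<^sup>2) * cmod (f (r *\<^sub>R \<eta>))) \<partial>(sphere_measure :: (real^'n) measure))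
          \<le> ennreal (r ^ (CARD('n) - 1)) * (ennreal (exp (- \<gamma> * r\<^sup>2)) * (ennpow (sphere_L2 f r) (1/2) * ennpow (emeasure (sphere_measure :: (real^'n) measure) (sphere 0 1)) (1/2)))"
        using True le by (simp add: mult_left_mono)
      also have "\<dots> = ennpow (emeasure (sphere_measure :: (real^'n) measure) (sphere 0 1)) (1/2) * (ennreal (indicator {0<..} r * r ^ (CARD('n) - 1) * exp (- \<gamma> * r\<^sup>2)) * ennpow (sphere_L2 f r) (1/2))"
        using True by (simp add: ennreal_mult mult_ac)
      finally show ?thesis .
    qed
  qed
  also have "\<dots> = ennpow (emeasure (sphere_measure :: (real^'n) measure) (sphere 0 1)) (1/2) * (\<integral>\<^sup>+ r. ennreal (indicator {0<..} r * r ^ (CARD('n) - 1) * exp (- \<gamma> * r\<^sup>2)) * ennpow (sphere_L2 f r) (1/2) \<partial>lborel)"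
    by (rule nn_integral_cmult) (rule borel_measurable_sphere_L2_times[OF fm], measurable)
  finally show ?thesis .
qed

lemma ennpow_sphere_L2_hermite_semigroup_le:
  fixes f :: "real^'n \<Rightarrow> complex"
  assumes t: "t > 0" and fm: "f \<in> borel_measurable lborel"
    and \<Phi>: "(\<integral>\<^sup>+ y. ennreal (exp (- kernel_decay t * (norm y)\<^sup>2) * cmod (f y)) \<partial>lborel) = ennreal \<phi>" "\<phi> \<ge> 0"
    and p: "p > 0" and r: "r > 0"
  shows "ennpow (sphere_L2 (hermite_semigroup t f) r) (p / 2) \<le>
    ennreal ((kernel_const t CARD('n) * \<phi>) powr p *
      enn2real (emeasure (sphere_measure :: (real^'n) measure) (sphere 0 1)) powr (p / 2) *
      exp (- (p * kernel_decay t) * r\<^sup>2))"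
proof -
  define c0 where "c0 = kernel_const t CARD('n)"
  define \<sigma> where "\<sigma> = enn2real (emeasure (sphere_measure :: (real^'n) measure) (sphere 0 1))"
  define Y where "Y = c0 * exp (- kernel_decay t * r\<^sup>2) * \<phi>"
  have c0: "c0 > 0" using kernel_const_pos[OF t] by (simp add: c0_def)
  have \<sigma>: "emeasure (sphere_measure :: (real^'n) measure) (sphere 0 1) = ennreal \<sigma>" "\<sigma> \<ge> 0"
    using emeasure_sphere_finite[where 'n='n] by (auto simp: \<sigma>_def less_top)
  have Y: "Y \<ge> 0" using c0 \<Phi> by (simp add: Y_def)
  have bound: "ennreal ((cmod (hermite_semigroup t f (r *\<^sub>R \<omega>)))\<^sup>2) \<le> ennreal (Y\<^sup>2)"
    if \<omega>: "\<omega> \<in> sphere (0::real^'n) 1" for \<omega>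
  proof -
    have "ennreal (cmod (hermite_semigroup t f (r *\<^sub>R \<omega>))) \<le> ennreal Y"
      using norm_hermite_semigroup_le[OF t fm, of "r *\<^sub>R \<omega>"] r \<omega> c0 \<Phi>
      by (simp add: c0_def Y_def ennreal_mult[symmetric] mult_ac)
    then have "cmod (hermite_semigroup t f (r *\<^sub>R \<omega>)) \<le> Y" using Y by (simp add: ennreal_le_iff)
    then show ?thesis by (intro ennreal_leI power_mono) auto
  qed
  have "sphere_L2 (hermite_semigroup t f) r \<le> (\<integral>\<^sup>+ \<omega>. ennreal (Y\<^sup>2) \<partial>(sphere_measure :: (real^'n) measure))"
    unfolding sphere_L2_def by (intro nn_integral_mono bound) (simp add: space_sphere_measure)
  also have "\<dots> = ennreal (Y\<^sup>2 * \<sigma>)"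
    using \<sigma> by (simp add: space_sphere_measure ennreal_mult)
  finally have "ennpow (sphere_L2 (hermite_semigroup t f) r) (p / 2) \<le> ennpow (ennreal (Y\<^sup>2 * \<sigma>)) (p / 2)"
    using p by (intro ennpow_mono) auto
  also have "\<dots> = ennreal ((Y\<^sup>2) powr (p / 2) * \<sigma> powr (p / 2))"
    using \<sigma> by (simp add: ennpow_ennreal powr_mult)
  also have "(Y\<^sup>2) powr (p / 2) = Y powr p"
  proof (cases "Y = 0")
    case False
    then have "Y\<^sup>2 = Y powr 2" using Y by (simp add: powr_realpow)
    then show ?thesis by (simp add: powr_powr)
  qed simp
  also have "Y powr p = (c0 * \<phi>) powr p * exp (- (p * kernel_decay t) * r\<^sup>2)"
    using c0 \<Phi> by (simp add: Y_def powr_mult exp_powr_real mult_ac)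
  finally show ?thesis by (simp add: c0_def \<sigma>_def mult_ac)
qed

context local_Ap_weight begin

definition Lp2_integral :: "(real^'n \<Rightarrow> complex) \<Rightarrow> ennreal" where
  "Lp2_integral f = (\<integral>\<^sup>+ r. ennpow (sphere_L2 f r) (p / 2) * ennreal (w r * r ^ (N - 1)) * indicator {0<..} r \<partial>lborel)"

lemma Lp2_norm_eq: "CARD('n) = N \<Longrightarrow> Lp2_norm p w (f :: real^'n \<Rightarrow> complex) = ennpow (Lp2_integral f) (1 / p)"
  unfolding Lp2_norm_def Lp2_integral_def sphere_L2_def by simp

lemma borel_measurable_weight_on_pos:
  fixes h :: "real \<Rightarrow> real \<Rightarrow> real"
  assumes m: "(\<lambda>r. h (indicator {0<..} r * w r) r) \<in> borel_measurable lborel"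
  shows "(\<lambda>r. indicator {0<..} r * h (w r) r) \<in> borel_measurable lborel"
proof -
  have "(\<lambda>r. indicator {0<..} r * h (indicator {0<..} r * w r) r) \<in> borel_measurable lborel"
    using m by (intro borel_measurable_times borel_measurable_indicator) auto
  moreover have "(\<lambda>r. indicator {0<..} r * h (indicator {0<..} r * w r) r) = (\<lambda>r. indicator {0<..} r * h (w r) r)"
    by (intro ext) (auto simp: indicator_def)
  ultimately show ?thesis by simp
qed

lemma radial_gaussian_le_Lp2_norm_Ap:
  fixes f :: "real^'n \<Rightarrow> complex" and \<gamma> :: real
  assumes cn: "CARD('n) = N" and p1: "p \<noteq> 1" and fm: "f \<in> borel_measurable lborel"
  shows "(\<integral>\<^sup>+ r. ennreal (indicator {0<..} r * r ^ (CARD('n) - 1) * exp (- \<gamma> * r\<^sup>2)) * ennpow (sphere_L2 f r) (1/2) \<partial>lborel)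
    \<le> Lp2_norm p w f * ennpow (\<integral>\<^sup>+ r. ennreal (indicator {0<..} r * exp (- (p / (p - 1) * \<gamma>) * r\<^sup>2) * (w r powr (- 1 / (p - 1)) * r ^ (N - 1))) \<partial>lborel) (1 / (p / (p - 1)))"
proof -
  have pp: "p > 1" using p p1 by simp
  define q where "q = p / (p - 1)"
  have q: "q > 1" "1/p + 1/q = 1" using pp by (auto simp: q_def field_simps)
  define F1 where "F1 r = ennpow (sphere_L2 f r) (1/2) * ennreal (indicator {0<..} r * (w r * r ^ (N - 1)) powr (1/p))" for r
  define G1 where "G1 r = ennreal (indicator {0<..} r * exp (- \<gamma> * r\<^sup>2) * (w r powr (- 1 / (p - 1)) * r ^ (N - 1)) powr (1/q))" for r
  have w0m: "(\<lambda>r. indicator {0<..} r * w r) \<in> borel_measurable lborel" by (rule wmeas)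
  have F1m: "F1 \<in> borel_measurable lborel"
  proof -
    have "(\<lambda>r. indicator {0<..} r * (\<lambda>x r. (x * r ^ (N - 1)) powr (1/p)) (w r) r) \<in> borel_measurable lborel"
      by (rule borel_measurable_weight_on_pos) (use w0m in measurable)
    then have "(\<lambda>r. ennreal (indicator {0<..} r * (w r * r ^ (N - 1)) powr (1/p)) * ennpow (sphere_L2 f r) (1/2)) \<in> borel_measurable lborel"
      by (intro borel_measurable_sphere_L2_times[OF fm]) simp
    then show ?thesis unfolding F1_def by (simp add: mult.commute)
  qed
  have G1m: "G1 \<in> borel_measurable lborel"
  proof -
    have "(\<lambda>r. indicator {0<..} r * (\<lambda>x r. exp (- \<gamma> * r\<^sup>2) * (x powr (- 1 / (p - 1)) * r ^ (N - 1)) powr (1/q)) (w r) r) \<in> borel_measurable lborel"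
      by (rule borel_measurable_weight_on_pos) (use w0m in measurable)
    then show ?thesis unfolding G1_def by (simp add: mult.assoc)
  qed
  have FG: "F1 r * G1 r = ennreal (indicator {0<..} r * r ^ (CARD('n) - 1) * exp (- \<gamma> * r\<^sup>2)) * ennpow (sphere_L2 f r) (1/2)" for r
  proof (cases "r > 0")
    case True
    have wr: "w r > 0" using wpos True by simp
    have e: "(w r * r ^ (N - 1)) powr (1/p) * (w r powr (- 1 / (p - 1)) * r ^ (N - 1)) powr (1/q) = r ^ (N - 1)"
      using conjugate_weight_powr_cancel[OF pp q(2) wr] True by simp
    have "F1 r * G1 r = ennpow (sphere_L2 f r) (1/2) * (ennreal ((w r * r ^ (N - 1)) powr (1/p)) * ennreal (exp (- \<gamma> * r\<^sup>2) * (w r powr (- 1 / (p - 1)) * r ^ (N - 1)) powr (1/q)))"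
      using True by (simp add: F1_def G1_def mult_ac)
    also have "ennreal ((w r * r ^ (N - 1)) powr (1/p)) * ennreal (exp (- \<gamma> * r\<^sup>2) * (w r powr (- 1 / (p - 1)) * r ^ (N - 1)) powr (1/q))
        = ennreal (exp (- \<gamma> * r\<^sup>2) * ((w r * r ^ (N - 1)) powr (1/p) * (w r powr (- 1 / (p - 1)) * r ^ (N - 1)) powr (1/q)))"
      by (simp add: ennreal_mult[symmetric] mult_ac)
    also note e
    finally show ?thesis using True cn by (simp add: mult_ac)
  qed (simp add: F1_def G1_def)
  have F1p: "ennpow (F1 r) p = ennpow (sphere_L2 f r) (p / 2) * ennreal (w r * r ^ (N - 1)) * indicator {0<..} r" for r
  proof (cases "r > 0")
    case True
    have wr: "w r > 0" using wpos True by simp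
    have "ennpow (F1 r) p = ennpow (ennpow (sphere_L2 f r) (1/2)) p * ennpow (ennreal ((w r * r ^ (N - 1)) powr (1/p))) p"
      using True pp by (simp add: F1_def ennpow_mult)
    also have "\<dots> = ennpow (sphere_L2 f r) (p / 2) * ennreal (w r * r ^ (N - 1))"
      using True pp wr by (simp add: ennpow_ennpow ennpow_ennreal powr_powr)
    finally show ?thesis using True by simp
  qed (use pp in \<open>simp add: F1_def ennpow_mult\<close>)
  have G1q: "ennpow (G1 r) q = ennreal (indicator {0<..} r * exp (- (p / (p - 1) * \<gamma>) * r\<^sup>2) * (w r powr (- 1 / (p - 1)) * r ^ (N - 1)))" for r
  proof (cases "r > 0")
    case True
    have wr: "w r > 0" using wpos True by simp
    have "ennpow (G1 r) q = ennreal ((exp (- \<gamma> * r\<^sup>2) * (w r powr (- 1 / (p - 1)) * r ^ (N - 1)) powr (1/q)) powr q)"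
      using True by (simp add: G1_def ennpow_ennreal)
    also have "(exp (- \<gamma> * r\<^sup>2) * (w r powr (- 1 / (p - 1)) * r ^ (N - 1)) powr (1/q)) powr q
        = exp (- \<gamma> * r\<^sup>2) powr q * (w r powr (- 1 / (p - 1)) * r ^ (N - 1))"
      using True wr q by (simp add: powr_mult powr_powr)
    also have "exp (- \<gamma> * r\<^sup>2) powr q = exp (- (p / (p - 1) * \<gamma>) * r\<^sup>2)"
      by (simp add: exp_powr_real q_def)
    finally show ?thesis using True by simp
  qed (simp add: G1_def ennpow_def)
  have "(\<integral>\<^sup>+ r. ennreal (indicator {0<..} r * r ^ (CARD('n) - 1) * exp (- \<gamma> * r\<^sup>2)) * ennpow (sphere_L2 f r) (1/2) \<partial>lborel)
      = (\<integral>\<^sup>+ r. F1 r * G1 r \<partial>lborel)" by (simp add: FG)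
  also have "\<dots> \<le> ennpow (\<integral>\<^sup>+ r. ennpow (F1 r) p \<partial>lborel) (1/p) * ennpow (\<integral>\<^sup>+ r. ennpow (G1 r) q \<partial>lborel) (1/q)"
    by (rule Hoelder_inequality_ennreal[OF pp q F1m G1m])
  also have "\<dots> = Lp2_norm p w f * ennpow (\<integral>\<^sup>+ r. ennreal (indicator {0<..} r * exp (- (p / (p - 1) * \<gamma>) * r\<^sup>2) * (w r powr (- 1 / (p - 1)) * r ^ (N - 1))) \<partial>lborel) (1 / (p / (p - 1)))"
    unfolding F1p G1q by (simp add: Lp2_norm_eq[OF cn] Lp2_integral_def q_def)
  finally show ?thesis .
qed

lemma borel_measurable_Lp2_integrand:
  fixes f :: "real^'n \<Rightarrow> complex"
  assumes fm: "f \<in> borel_measurable lborel"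
  shows "(\<lambda>r. ennpow (sphere_L2 f r) a * ennreal (w r * r ^ (N - 1)) * indicator {0<..} r) \<in> borel_measurable lborel"
proof -
  have "(\<lambda>r. indicator {0<..} r * (\<lambda>x r. x * r ^ (N - 1)) (w r) r) \<in> borel_measurable lborel"
    by (rule borel_measurable_weight_on_pos) (use wmeas in measurable)
  then have "(\<lambda>r. ennreal (indicator {0<..} r * (w r * r ^ (N - 1))) * ennpow (sphere_L2 f r) a) \<in> borel_measurable lborel"
    by (intro borel_measurable_sphere_L2_times[OF fm]) simp
  moreover have "(\<lambda>r. ennreal (indicator {0<..} r * (w r * r ^ (N - 1))) * ennpow (sphere_L2 f r) a) =
      (\<lambda>r. ennpow (sphere_L2 f r) a * ennreal (w r * r ^ (N - 1)) * indicator {0<..} r)"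
    by (intro ext) (auto simp: indicator_def mult.commute)
  ultimately show ?thesis by simp
qed

lemma radial_gaussian_le_Lp2_norm_A1:
  fixes \<gamma> :: real
  assumes cn: "CARD('n) = N" and p1: "p = 1" and g: "\<gamma> > 0"
  shows "\<exists>K\<ge>0. \<forall>f :: real^'n \<Rightarrow> complex. f \<in> borel_measurable lborel \<longrightarrow>
    (\<integral>\<^sup>+ r. ennreal (indicator {0<..} r * r ^ (CARD('n) - 1) * exp (- \<gamma> * r\<^sup>2)) * ennpow (sphere_L2 f r) (1/2) \<partial>lborel)
    \<le> ennreal K * Lp2_norm p w f"
proof -
  obtain K where K: "AE r in lborel. r > 0 \<longrightarrow> exp (- \<gamma> * r\<^sup>2) \<le> K * w r" using gaussian_le_A1_weight[OF p1 g] by auto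
  define K' where "K' = max K 0"
  have K': "AE r in lborel. r > 0 \<longrightarrow> exp (- \<gamma> * r\<^sup>2) \<le> K' * w r"
    using K
  proof eventually_elim
    case (elim r)
    show ?case
    proof
      assume r: "r > 0"
      then have "exp (- \<gamma> * r\<^sup>2) \<le> K * w r" using elim by simp
      also have "\<dots> \<le> K' * w r" using wpos[OF r] by (intro mult_right_mono) (auto simp: K'_def)
      finally show "exp (- \<gamma> * r\<^sup>2) \<le> K' * w r" .
    qed
  qed
  have "(\<integral>\<^sup>+ r. ennreal (indicator {0<..} r * r ^ (CARD('n) - 1) * exp (- \<gamma> * r\<^sup>2)) * ennpow (sphere_L2 f r) (1/2) \<partial>lborel)
    \<le> ennreal K' * Lp2_norm p w f" if fm: "f \<in> borel_measurable lborel" for f :: "real^'n \<Rightarrow> complex"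
  proof -
  have "(\<integral>\<^sup>+ r. ennreal (indicator {0<..} r * r ^ (CARD('n) - 1) * exp (- \<gamma> * r\<^sup>2)) * ennpow (sphere_L2 f r) (1/2) \<partial>lborel)
     \<le> (\<integral>\<^sup>+ r. ennreal K' * (ennpow (sphere_L2 f r) (p / 2) * ennreal (w r * r ^ (N - 1)) * indicator {0<..} r) \<partial>lborel)"
    using K'
  proof (intro nn_integral_mono_AE, eventually_elim)
    case (elim r)
    show ?case
    proof (cases "r > 0")
      case True
      have "r ^ (N - 1) * exp (- \<gamma> * r\<^sup>2) \<le> r ^ (N - 1) * (K' * w r)"
        using elim True by (intro mult_left_mono) auto
      then have "ennreal (r ^ (N - 1) * exp (- \<gamma> * r\<^sup>2)) \<le> ennreal K' * ennreal (w r * r ^ (N - 1))"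
        using True wpos[OF True] by (simp add: ennreal_mult[symmetric] K'_def mult_ac ennreal_leI)
      then have le: "ennreal (r ^ (N - 1) * exp (- \<gamma> * r\<^sup>2)) * ennpow (sphere_L2 f r) (1/2) \<le> ennreal K' * ennreal (w r * r ^ (N - 1)) * ennpow (sphere_L2 f r) (1/2)"
        by (rule mult_right_mono) simp
      have e1: "ennreal (indicator {0<..} r * r ^ (CARD('n) - 1) * exp (- \<gamma> * r\<^sup>2)) = ennreal (r ^ (N - 1) * exp (- \<gamma> * r\<^sup>2))"
        using True cn by simp
      have e2: "ennreal K' * (ennpow (sphere_L2 f r) (p / 2) * ennreal (w r * r ^ (N - 1)) * indicator {0<..} r)
          = ennreal K' * ennreal (w r * r ^ (N - 1)) * ennpow (sphere_L2 f r) (1/2)"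
        using True p1 by (simp add: mult_ac)
      show ?thesis unfolding e1 e2 by (rule le)
    qed simp
  qed
  also have "\<dots> = ennreal K' * Lp2_integral f"
    unfolding Lp2_integral_def by (rule nn_integral_cmult) (rule borel_measurable_Lp2_integrand[OF fm])
  also have "\<dots> = ennreal K' * Lp2_norm p w f"
  proof -
    have e: "1 / p = 1" using p1 by simp
    show ?thesis unfolding Lp2_norm_eq[OF cn] by (simp only: e ennpow_one)
  qed
  finally show ?thesis .
  qed
  then show ?thesis by (intro exI[of _ K']) (auto simp: K'_def)
qed

lemma Lp2_norm_hermite_semigroup_le:
  fixes f :: "real^'n \<Rightarrow> complex" and t :: real
  assumes cn: "CARD('n) = N" and t: "t > 0" and fm: "f \<in> borel_measurable lborel"
    and Phi: "(\<integral>\<^sup>+ y. ennreal (exp (- kernel_decay t * (norm y)\<^sup>2) * cmod (f y)) \<partial>lborel) < \<infinity>"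
  shows "Lp2_norm p w (hermite_semigroup t f) \<le>
    ennreal (kernel_const t CARD('n) * enn2real (emeasure (sphere_measure :: (real^'n) measure) (sphere 0 1)) powr (1/2) *
      enn2real (\<integral>\<^sup>+ r. ennreal (indicator {0<..} r * exp (- (p * kernel_decay t) * r\<^sup>2) * (w r * r ^ (N - 1))) \<partial>lborel) powr (1/p)) *
    (\<integral>\<^sup>+ y. ennreal (exp (- kernel_decay t * (norm y)\<^sup>2) * cmod (f y)) \<partial>lborel)"
proof -
  define c0 where "c0 = kernel_const t CARD('n)"
  define \<Phi> where "\<Phi> = (\<integral>\<^sup>+ y. ennreal (exp (- kernel_decay t * (norm y)\<^sup>2) * cmod (f y)) \<partial>lborel)"
  define \<phi> where "\<phi> = enn2real \<Phi>"
  define \<sigma> where "\<sigma> = enn2real (emeasure (sphere_measure :: (real^'n) measure) (sphere 0 1))"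
  define A where "A = (\<integral>\<^sup>+ r. ennreal (indicator {0<..} r * exp (- (p * kernel_decay t) * r\<^sup>2) * (w r * r ^ (N - 1))) \<partial>lborel)"
  define Ar where "Ar = enn2real A"
  have pp: "p > 0" using p by simp
  have c0: "c0 > 0" using kernel_const_pos[OF t] by (simp add: c0_def)
  have \<Phi>: "\<Phi> = ennreal \<phi>" "\<phi> \<ge> 0" using Phi by (auto simp: \<Phi>_def \<phi>_def less_top)
  have \<sigma>: "emeasure (sphere_measure :: (real^'n) measure) (sphere 0 1) = ennreal \<sigma>" "\<sigma> \<ge> 0"
    using emeasure_sphere_finite[where 'n='n] by (auto simp: \<sigma>_def less_top)
  have A: "A = ennreal Ar" "Ar \<ge> 0"
    using gaussian_weight_integrable[of "p * kernel_decay t"] pp kernel_decay_pos[OF t] by (auto simp: A_def Ar_def less_top)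
  define Z where "Z = (c0 * \<phi>) powr p * \<sigma> powr (p / 2)"
  have Z: "Z \<ge> 0" by (simp add: Z_def)
  have pt: "ennpow (sphere_L2 (hermite_semigroup t f) r) (p / 2) * ennreal (w r * r ^ (N - 1)) * indicator {0<..} r
      \<le> ennreal Z * ennreal (indicator {0<..} r * exp (- (p * kernel_decay t) * r\<^sup>2) * (w r * r ^ (N - 1)))" for r
  proof (cases "r > 0")
    case True
    have "ennpow (sphere_L2 (hermite_semigroup t f) r) (p / 2) * ennreal (w r * r ^ (N - 1)) \<le>
        ennreal (Z * exp (- (p * kernel_decay t) * r\<^sup>2)) * ennreal (w r * r ^ (N - 1))"
      using ennpow_sphere_L2_hermite_semigroup_le[OF t fm \<Phi>[unfolded \<Phi>_def] pp True]
      by (intro mult_right_mono) (simp_all add: Z_def c0_def \<sigma>_def)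
    also have "\<dots> = ennreal Z * ennreal (exp (- (p * kernel_decay t) * r\<^sup>2) * (w r * r ^ (N - 1)))"
      using Z True wpos[OF True] by (simp add: ennreal_mult[symmetric] mult_ac)
    finally show ?thesis using True by simp
  qed simp
  have "Lp2_integral (hermite_semigroup t f) \<le> (\<integral>\<^sup>+ r. ennreal Z * ennreal (indicator {0<..} r * exp (- (p * kernel_decay t) * r\<^sup>2) * (w r * r ^ (N - 1))) \<partial>lborel)"
    unfolding Lp2_integral_def by (intro nn_integral_mono pt)
  also have "\<dots> = ennreal Z * A"
    unfolding A_def
  proof (rule nn_integral_cmult)
    have "(\<lambda>r. indicator {0<..} r * (\<lambda>x r. exp (- (p * kernel_decay t) * r\<^sup>2) * (x * r ^ (N - 1))) (w r) r) \<in> borel_measurable lborel"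
      by (rule borel_measurable_weight_on_pos) (use wmeas in measurable)
    then show "(\<lambda>r. ennreal (indicator {0<..} r * exp (- (p * kernel_decay t) * r\<^sup>2) * (w r * r ^ (N - 1)))) \<in> borel_measurable lborel"
      by (simp add: mult.assoc)
  qed
  also have "\<dots> = ennreal (Z * Ar)" using A Z by (simp add: ennreal_mult)
  finally have "ennpow (Lp2_integral (hermite_semigroup t f)) (1/p) \<le> ennpow (ennreal (Z * Ar)) (1/p)"
    using pp by (intro ennpow_mono) auto
  also have "\<dots> = ennreal ((Z * Ar) powr (1/p))" using Z A by (simp add: ennpow_ennreal)
  also have "(Z * Ar) powr (1/p) = c0 * \<sigma> powr (1/2) * Ar powr (1/p) * \<phi>"
  proof -
    have "(Z * Ar) powr (1/p) = ((c0 * \<phi>) powr p) powr (1/p) * (\<sigma> powr (p / 2)) powr (1/p) * Ar powr (1/p)"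
      using Z A \<sigma> c0 \<Phi> by (simp add: Z_def powr_mult)
    also have "((c0 * \<phi>) powr p) powr (1/p) = c0 * \<phi>"
      using c0 \<Phi> pp by (simp add: powr_powr)
    also have "(\<sigma> powr (p / 2)) powr (1/p) = \<sigma> powr (1/2)"
      using pp by (simp add: powr_powr)
    finally show ?thesis by (simp add: mult_ac)
  qed
  finally have "Lp2_norm p w (hermite_semigroup t f) \<le> ennreal (c0 * \<sigma> powr (1/2) * Ar powr (1/p) * \<phi>)"
    by (simp add: Lp2_norm_eq[OF cn])
  also have "\<dots> = ennreal (c0 * \<sigma> powr (1/2) * Ar powr (1/p)) * \<Phi>"
    using \<Phi> c0 by (simp add: ennreal_mult)
  finally show ?thesis by (simp add: c0_def \<sigma>_def Ar_def A_def \<Phi>_def)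
qed

lemma gaussian_moment_le_Lp2_norm:
  assumes cn: "CARD('n) = N" and g: "\<gamma> > 0"
  shows "\<exists>Q\<ge>0. \<forall>f :: real^'n \<Rightarrow> complex. f \<in> borel_measurable lborel \<longrightarrow>
    (\<integral>\<^sup>+ y. ennreal (exp (- \<gamma> * (norm y)\<^sup>2) * cmod (f y)) \<partial>lborel) \<le> ennreal Q * Lp2_norm p w f"
proof -
  have "\<exists>Q\<ge>0. \<forall>f :: real^'n \<Rightarrow> complex. f \<in> borel_measurable lborel \<longrightarrow>
      (\<integral>\<^sup>+ r. ennreal (indicator {0<..} r * r ^ (CARD('n) - 1) * exp (- \<gamma> * r\<^sup>2)) * ennpow (sphere_L2 f r) (1/2) \<partial>lborel)
      \<le> ennreal Q * Lp2_norm p w f"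
  proof (cases "p = 1")
    case True then show ?thesis using radial_gaussian_le_Lp2_norm_A1[OF cn True g] by blast
  next
    case False
    define B where "B = (\<integral>\<^sup>+ r. ennreal (indicator {0<..} r * exp (- (p / (p - 1) * \<gamma>) * r\<^sup>2) * (w r powr (- 1 / (p - 1)) * r ^ (N - 1))) \<partial>lborel)"
    have "B < \<infinity>" unfolding B_def using p False g by (intro gaussian_dual_weight_integrable) auto
    then obtain Br where Br: "B = ennreal Br" "Br \<ge> 0" by (cases B) (auto simp: less_top)
    show ?thesis
    proof (intro exI[of _ "Br powr (1 / (p / (p - 1)))"] conjI allI impI)
      fix f :: "real^'n \<Rightarrow> complex" assume "f \<in> borel_measurable lborel"
      from radial_gaussian_le_Lp2_norm_Ap[OF cn False this, of \<gamma>, folded B_def]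
      show "(\<integral>\<^sup>+ r. ennreal (indicator {0<..} r * r ^ (CARD('n) - 1) * exp (- \<gamma> * r\<^sup>2)) * ennpow (sphere_L2 f r) (1/2) \<partial>lborel)
          \<le> ennreal (Br powr (1 / (p / (p - 1)))) * Lp2_norm p w f"
        using Br by (simp add: ennpow_ennreal mult.commute)
    qed simp
  qed
  then obtain Q where Q: "Q \<ge> 0" "\<And>f :: real^'n \<Rightarrow> complex. f \<in> borel_measurable lborel \<Longrightarrow>
      (\<integral>\<^sup>+ r. ennreal (indicator {0<..} r * r ^ (CARD('n) - 1) * exp (- \<gamma> * r\<^sup>2)) * ennpow (sphere_L2 f r) (1/2) \<partial>lborel)
      \<le> ennreal Q * Lp2_norm p w f" by blast
  define \<sigma> where "\<sigma> = enn2real (emeasure (sphere_measure :: (real^'n) measure) (sphere 0 1))"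
  have \<sigma>: "emeasure (sphere_measure :: (real^'n) measure) (sphere 0 1) = ennreal \<sigma>"
    using emeasure_sphere_finite[where 'n='n] by (auto simp: \<sigma>_def less_top)
  have \<sigma>_nonneg: "\<sigma> \<ge> 0" by (simp add: \<sigma>_def)
  have "(\<integral>\<^sup>+ y. ennreal (exp (- \<gamma> * (norm y)\<^sup>2) * cmod (f y)) \<partial>lborel) \<le> ennreal (\<sigma> powr (1/2) * Q) * Lp2_norm p w f"
    if fm: "f \<in> borel_measurable lborel" for f :: "real^'n \<Rightarrow> complex"
  proof -
    have "(\<integral>\<^sup>+ y. ennreal (exp (- \<gamma> * (norm y)\<^sup>2) * cmod (f y)) \<partial>lborel) \<le>
        ennreal (\<sigma> powr (1/2)) *
        (\<integral>\<^sup>+ r. ennreal (indicator {0<..} r * r ^ (CARD('n) - 1) * exp (- \<gamma> * r\<^sup>2)) * ennpow (sphere_L2 f r) (1/2) \<partial>lborel)"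
      using nn_integral_gaussian_le_radial[OF _ fm, of \<gamma>] N cn \<sigma> by (simp add: ennpow_ennreal \<sigma>_nonneg)
    also have "\<dots> \<le> ennreal (\<sigma> powr (1/2)) * (ennreal Q * Lp2_norm p w f)"
      by (intro mult_left_mono Q(2) fm) simp
    finally show ?thesis using Q(1) by (simp add: ennreal_mult mult.assoc)
  qed
  then show ?thesis using Q(1) by (intro exI[of _ "\<sigma> powr (1/2) * Q"]) auto
qed

end

theorem theorem3p3:
  fixes t p :: real and w :: "real \<Rightarrow> real"
  assumes "CARD('n) \<ge> 2" and "t > 0" and "1 \<le> p"
    and "w \<in> Ap_loc CARD('n) p"
  shows "\<exists>C::real. \<forall>f \<in> (Lp2_space p w :: (real ^ 'n \<Rightarrow> complex) set).
           Lp2_norm p w (hermite_semigroup t f) \<le> ennreal C * Lp2_norm p w f"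
proof -
  obtain C where "local_Ap_weight CARD('n) p w C"
    using local_Ap_weight_if_Ap_loc assms by blast
  then interpret local_Ap_weight "CARD('n)" p w C .
  obtain Q where Q: "Q \<ge> 0" "\<And>f :: real^'n \<Rightarrow> complex. f \<in> borel_measurable lborel \<Longrightarrow>
      (\<integral>\<^sup>+ y. ennreal (exp (- kernel_decay t * (norm y)\<^sup>2) * cmod (f y)) \<partial>lborel) \<le> ennreal Q * Lp2_norm p w f"
    using gaussian_moment_le_Lp2_norm[OF refl kernel_decay_pos[OF assms(2)]] by blast
  define K where "K = kernel_const t CARD('n) *
    enn2real (emeasure (sphere_measure :: (real^'n) measure) (sphere 0 1)) powr (1/2) *
    enn2real (\<integral>\<^sup>+ r. ennreal (indicator {0<..} r * exp (- (p * kernel_decay t) * r\<^sup>2) * (w r * r ^ (CARD('n) - 1))) \<partial>lborel) powr (1/p)"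
  have K: "K \<ge> 0" using kernel_const_pos[OF assms(2), of "CARD('n)"] by (simp add: K_def)
  show ?thesis
  proof (intro exI[of _ "K * Q"] ballI)
    fix f :: "real^'n \<Rightarrow> complex" assume "f \<in> Lp2_space p w"
    then have fm: "f \<in> borel_measurable lborel" and fin: "Lp2_norm p w f < \<infinity>"
      by (auto simp: Lp2_space_def)
    have "(\<integral>\<^sup>+ y. ennreal (exp (- kernel_decay t * (norm y)\<^sup>2) * cmod (f y)) \<partial>lborel) < \<infinity>"
      using le_less_trans[OF Q(2)[OF fm]] fin by (simp add: ennreal_mult_less_top)
    then have "Lp2_norm p w (hermite_semigroup t f) \<le> ennreal K * (ennreal Q * Lp2_norm p w f)"
      using Lp2_norm_hermite_semigroup_le[OF refl assms(2) fm] Q(2)[OF fm] unfolding K_def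
      by (meson mult_left_mono order_trans zero_le)
    then show "Lp2_norm p w (hermite_semigroup t f) \<le> ennreal (K * Q) * Lp2_norm p w f"
      using K Q(1) by (simp add: ennreal_mult mult.assoc)
  qed
qed

end
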